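(* Consider the heteroscedastic linear model $y(i,k)=\tau_i+\mu+\mathbf g^T(k)\beta+\varepsilon(i,k)$ with treatments $i\in\{1,\ldots,v_1\}$, covariate indices $k\in\{1,\ldots,d\}$, known regressors $\mathbf g(k)\in\mathbb R^{v_2}$, uncorrelated mean-zero errors with $\mathrm{Var}(\varepsilon(i,k))=\sigma^2/\lambda_i$, $\lambda_i>0$ known. Let $\Phi$ be an eigenvalue-based information function. If there exists a $\Phi$-optimal design for $\mathbf A^T\theta$ in this model, then there exists a product design $w\otimes\alpha$ (i.e. a design with $\xi(i,k)=w_i\alpha_k$ for some probability vectors $w\in\mathbb R^{v_1}$, $\alpha\in\mathbb R^d$) that is $\Phi$-optimal for $\mathbf A^T\theta$.
   Context: Write $\theta=(\tau^T,\mu,\beta^T)^T$, $\mathbf f(i,k)=(\mathbf e_i^T,1,\mathbf g^T(k))^T$. A design $\xi$ is a nonnegative function on $\{1,\ldots,v_1\}\times\{1,\ldots,d\}$ summing to one, with moment matrix $\mathbf M(\xi)=\sum_{i,k}\xi(i,k)\lambda_i\mathbf f(i,k)\mathbf f^T(i,k)$. Let $\mathbf Q_1\in\mathbb R^{v_1\times s_1}$ have full column rank, satisfy $\mathbf Q_1^T\mathbf 1_{v_1}=\mathbf 0$ and have no zero row; let $\mathbf K\in\mathbb R^{v_2\times s_2}$ have full column rank; $\mathbf Q_2=(\mathbf 0_{s_2},\mathbf K^T)^T$, $\mathbf A=\mathrm{diag}(\mathbf Q_1,\mathbf Q_2)$. A design is feasible for $\mathbf A^T\theta$ if $\mathcal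 C(\mathbf A)\subseteq\mathcal C(\mathbf M(\xi))$; its information matrix is then $\mathbf N_{\mathbf A}(\xi)=(\mathbf A^T\mathbf M^-(\xi)\mathbf A)^{-1}$. A design is $\Phi$-optimal for $\mathbf A^T\theta$ if it is feasible and maximizes $\Phi(\mathbf N_{\mathbf A}(\xi))$ over all feasible designs. An information function is a positively homogeneous, concave, nonnegative, nonconstant, upper semicontinuous function on nonnegative definite $s\times s$ matrices ($s=s_1+s_2$); it is eigenvalue-based if it depends only on the eigenvalues of its argument. *)

theory Defs
  imports "Jordan_Normal_Form.Matrix" "Jordan_Normal_Form.Char_Poly"
begin

definition nnd :: "nat \<Rightarrow> real mat \<Rightarrow> bool" where
  "nnd s C \<longleftrightarrow> C \<in> carrier_mat s s \<and> transpose_mat C = C \<and>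
     (\<forall>x \<in> carrier_vec s. x \<bullet> (C *\<^sub>v x) \<ge> 0)"

definition information_function :: "nat \<Rightarrow> (real mat \<Rightarrow> real) \<Rightarrow> bool" where
  "information_function s \<Phi> \<longleftrightarrow>
     (\<forall>C c. nnd s C \<and> c > 0 \<longrightarrow> \<Phi> (c \<cdot>\<^sub>m C) = c * \<Phi> C) \<and>
     (\<forall>C D t. nnd s C \<and> nnd s D \<and> 0 \<le> t \<and> t \<le> 1 \<longrightarrow>
        \<Phi> ((1 - t) \<cdot>\<^sub>m C + t \<cdot>\<^sub>m D) \<ge> (1 - t) * \<Phi> C + t * \<Phi> D) \<and>
     (\<forall>C. nnd s C \<longrightarrow> \<Phi> C \<ge> 0) \<and>
     (\<exists>C D. nnd s C \<and> nnd s D \<and> \<Phi> C \<noteq> \<Phi> D) \<and>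
     (\<forall>C \<epsilon>. nnd s C \<and> \<epsilon> > 0 \<longrightarrow> (\<exists>\<delta>>0. \<forall>D. nnd s D \<and>
        (\<forall>a<s. \<forall>b<s. \<bar>D $$ (a,b) - C $$ (a,b)\<bar> < \<delta>) \<longrightarrow> \<Phi> D < \<Phi> C + \<epsilon>))"

text \<open>Eigenvalue-based: depends only on the eigenvalues (with algebraic multiplicities,
  i.e. root multiplicities in the characteristic polynomial).\<close>
definition eigenvalue_based :: "nat \<Rightarrow> (real mat \<Rightarrow> real) \<Rightarrow> bool" where
  "eigenvalue_based s \<Phi> \<longleftrightarrow>
     (\<forall>C D. nnd s C \<and> nnd s D \<and> (\<forall>a. order a (char_poly C) = order a (char_poly D))
        \<longrightarrow> \<Phi> C = \<Phi> D)"

definition full_col_rank :: "real mat \<Rightarrow> bool" where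
  "full_col_rank Q \<longleftrightarrow> (\<forall>x \<in> carrier_vec (dim_col Q). Q *\<^sub>v x = 0\<^sub>v (dim_row Q) \<longrightarrow> x = 0\<^sub>v (dim_col Q))"

definition colspace_sub :: "real mat \<Rightarrow> real mat \<Rightarrow> bool" where
  "colspace_sub A M \<longleftrightarrow> (\<forall>x \<in> carrier_vec (dim_col A). \<exists>y \<in> carrier_vec (dim_col M). A *\<^sub>v x = M *\<^sub>v y)"

text \<open>A generalized inverse M^- (any G with M G M = M; the information matrix does
  not depend on the choice for feasible designs).\<close>
definition ginv :: "real mat \<Rightarrow> real mat" where
  "ginv M = (SOME G. G \<in> carrier_mat (dim_col M) (dim_row M) \<and> M * G * M = M)"

definition minv :: "real mat \<Rightarrow> real mat" where
  "minv B = (SOME C. C \<in> carrier_mat (dim_row B) (dim_row B) \<and> B * C = 1\<^sub>m (dim_row B) \<and> C * B = 1\<^sub>m (dim_row B))"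

text \<open>Regression vector f(i,k) = (e_i, 1, g(k)); indices are 0-based: i < v1, k < d.\<close>
definition fvec :: "nat \<Rightarrow> (nat \<Rightarrow> real vec) \<Rightarrow> nat \<Rightarrow> nat \<Rightarrow> real vec" where
  "fvec v1 g i k = unit_vec v1 i @\<^sub>v vec 1 (\<lambda>_. 1) @\<^sub>v g k"

definition is_design :: "nat \<Rightarrow> nat \<Rightarrow> (nat \<Rightarrow> nat \<Rightarrow> real) \<Rightarrow> bool" where
  "is_design v1 d \<xi> \<longleftrightarrow> (\<forall>i<v1. \<forall>k<d. \<xi> i k \<ge> 0) \<and> (\<Sum>i<v1. \<Sum>k<d. \<xi> i k) = 1"

definition prob_vec :: "nat \<Rightarrow> (nat \<Rightarrow> real) \<Rightarrow> bool" where
  "prob_vec n w \<longleftrightarrow> (\<forall>i<n. w i \<ge> 0) \<and> (\<Sum>i<n. w i) = 1"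

definition moment_mat :: "nat \<Rightarrow> nat \<Rightarrow> nat \<Rightarrow> (nat \<Rightarrow> real) \<Rightarrow> (nat \<Rightarrow> real vec)
    \<Rightarrow> (nat \<Rightarrow> nat \<Rightarrow> real) \<Rightarrow> real mat" where
  "moment_mat v1 v2 d lam g \<xi> = mat (v1 + 1 + v2) (v1 + 1 + v2) (\<lambda>(a,b).
     \<Sum>i<v1. \<Sum>k<d. \<xi> i k * lam i * (fvec v1 g i k $ a) * (fvec v1 g i k $ b))"

definition feasible :: "nat \<Rightarrow> nat \<Rightarrow> nat \<Rightarrow> (nat \<Rightarrow> real) \<Rightarrow> (nat \<Rightarrow> real vec)
    \<Rightarrow> real mat \<Rightarrow> (nat \<Rightarrow> nat \<Rightarrow> real) \<Rightarrow> bool" where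
  "feasible v1 v2 d lam g A \<xi> \<longleftrightarrow> is_design v1 d \<xi> \<and> colspace_sub A (moment_mat v1 v2 d lam g \<xi>)"

definition info_mat :: "nat \<Rightarrow> nat \<Rightarrow> nat \<Rightarrow> (nat \<Rightarrow> real) \<Rightarrow> (nat \<Rightarrow> real vec)
    \<Rightarrow> real mat \<Rightarrow> (nat \<Rightarrow> nat \<Rightarrow> real) \<Rightarrow> real mat" where
  "info_mat v1 v2 d lam g A \<xi> = minv (transpose_mat A * ginv (moment_mat v1 v2 d lam g \<xi>) * A)"

definition phi_optimal :: "(real mat \<Rightarrow> real) \<Rightarrow> nat \<Rightarrow> nat \<Rightarrow> nat \<Rightarrow> (nat \<Rightarrow> real)
    \<Rightarrow> (nat \<Rightarrow> real vec) \<Rightarrow> real mat \<Rightarrow> (nat \<Rightarrow> nat \<Rightarrow> real) \<Rightarrow> bool" where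
  "phi_optimal \<Phi> v1 v2 d lam g A \<xi> \<longleftrightarrow> feasible v1 v2 d lam g A \<xi> \<and>
     (\<forall>\<eta>. feasible v1 v2 d lam g A \<eta> \<longrightarrow>
        \<Phi> (info_mat v1 v2 d lam g A \<eta>) \<le> \<Phi> (info_mat v1 v2 d lam g A \<xi>))"

end

theory Submission
  imports Defs
begin

text \<open>Let \<open>\<xi>\<close> be \<open>\<Phi>\<close>-optimal, let \<open>w\<close> be its marginal over treatments and \<open>\<alpha>\<close> its
  \<open>\<lambda>\<close>-weighted marginal over covariates. Writing \<open>f(i,k)\<^sup>T u = p\<^sub>i + r\<^sub>k\<close>, the reflected and
  shifted vector \<open>u'\<close> (same treatment part, \<open>\<mu>\<close> shifted by \<open>2 t\<close>, \<open>\<beta>\<close>-part negated) satisfies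
  \<open>(u\<^sup>T M(\<xi>) u + u'\<^sup>T M(\<xi>) u') / 2 \<le> u\<^sup>T M(w \<otimes> \<alpha>) u\<close> for a suitable \<open>t\<close>, because the
  average of \<open>(p\<^sub>i + r\<^sub>k)\<^sup>2\<close> and \<open>(p\<^sub>i + 2 t - r\<^sub>k)\<^sup>2\<close> only depends on the marginals of \<open>\<xi>\<close>.
  Since \<open>A\<^sup>T u' = S A\<^sup>T u\<close> with \<open>S = diag(I, -I)\<close>, the description of \<open>x\<^sup>T N\<^sub>A x\<close> as the
  minimum of \<open>u\<^sup>T M u\<close> over \<open>A\<^sup>T u = x\<close> shows that \<open>w \<otimes> \<alpha>\<close> is feasible and that
  \<open>N\<^sub>A(w \<otimes> \<alpha>)\<close> dominates \<open>(N\<^sub>A(\<xi>) + S N\<^sub>A(\<xi>) S) / 2\<close> in the Loewner order. As \<open>S N S\<close> has the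
  eigenvalues of \<open>N\<close>, monotonicity and concavity of \<open>\<Phi>\<close> give \<open>\<Phi>(N\<^sub>A(w \<otimes> \<alpha>)) \<ge> \<Phi>(N\<^sub>A(\<xi>))\<close>.\<close>

section \<open>Real matrices\<close>

lemma scalar_prod_self_eq_0_real:
  fixes r :: "real vec"
  assumes "r \<in> carrier_vec n" and "r \<bullet> r = 0"
  shows "r = 0\<^sub>v n"
  using conjugate_square_eq_0_vec[OF assms(1)] assms(2) by simp

lemma mult_mat_vec_index_sum:
  assumes "M \<in> carrier_mat n m" and "y \<in> carrier_vec m" and "i < n"
  shows "(M *\<^sub>v y) $ i = (\<Sum>l<m. M $$ (i,l) * y $ l)"
  using assms by (simp add: mult_mat_vec_def scalar_prod_def row_def atLeast0LessThan)

lemma quadratic_form_sum: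
  assumes C: "C \<in> carrier_mat s s" and x: "x \<in> carrier_vec s"
  shows "x \<bullet> (C *\<^sub>v x) = (\<Sum>a<s. \<Sum>b<s. x $ a * C $$ (a,b) * x $ b)"
  using assms by (simp add: scalar_prod_def atLeast0LessThan mult_mat_vec_index_sum[OF C x]
      sum_distrib_left mult.assoc)

lemma sym_mat_scalar_prod_swap:
  fixes M :: "'a :: comm_ring mat"
  assumes M: "M \<in> carrier_mat n n" and sym: "transpose_mat M = M"
    and u: "u \<in> carrier_vec n" and v: "v \<in> carrier_vec n"
  shows "u \<bullet> (M *\<^sub>v v) = v \<bullet> (M *\<^sub>v u)"
proof -
  have "u \<bullet> (M *\<^sub>v v) = (M *\<^sub>v u) \<bullet> v"
    using transpose_vec_mult_scalar[OF M v u] sym by simp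
  also have "\<dots> = v \<bullet> (M *\<^sub>v u)"
    using M u v by (intro comm_scalar_prod) auto
  finally show ?thesis .
qed

lemma minus_vec_eq_0_imp_eq:
  fixes a b :: "'a :: ab_group_add vec"
  assumes "a \<in> carrier_vec n" and "b \<in> carrier_vec n" and "a - b = 0\<^sub>v n"
  shows "a = b"
proof (rule eq_vecI)
  fix i assume "i < dim_vec b"
  then show "a $ i = b $ i"
    using assms(1,2) arg_cong[OF assms(3), of "\<lambda>v. v $ i"] by simp
qed (use assms in simp)

lemma projection_onto_line:
  fixes r s :: "nat \<Rightarrow> real"
  shows "\<exists>a. (\<Sum>i<n. s i * (r i - a * s i)) = 0"
proof (cases "(\<Sum>i<n. s i * s i) = 0")
  case True
  then have "\<forall>i\<in>{..<n}. s i * s i = 0"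
    by (subst sum_nonneg_eq_0_iff[symmetric]) auto
  then show ?thesis by simp
next
  case False
  define a where "a = (\<Sum>i<n. s i * r i) / (\<Sum>i<n. s i * s i)"
  have "(\<Sum>i<n. s i * (r i - a * s i)) = (\<Sum>i<n. s i * r i) - a * (\<Sum>i<n. s i * s i)"
    by (simp add: sum_subtractf sum_distrib_left algebra_simps)
  also have "\<dots> = 0" using False by (simp add: a_def)
  finally show ?thesis by blast
qed

text \<open>The residual of \<open>v\<close> against the vectors \<open>c 0, \<dots>, c (m - 1)\<close> can be made orthogonal to all
  of them; by Gram--Schmidt, the residual of \<open>c m\<close> is used to correct the old residual.\<close>

lemma normal_equations_solvable:
  fixes c :: "nat \<Rightarrow> nat \<Rightarrow> real"
  shows "\<exists>y. \<forall>j<m. (\<Sum>i<n. c j i * (v i - (\<Sum>l<m. c l i * y l))) = 0"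
proof (induction m arbitrary: v)
  case 0
  then show ?case by simp
next
  case (Suc m)
  obtain y1 where y1: "\<forall>j<m. (\<Sum>i<n. c j i * (v i - (\<Sum>l<m. c l i * y1 l))) = 0"
    using Suc by blast
  obtain y2 where y2: "\<forall>j<m. (\<Sum>i<n. c j i * (c m i - (\<Sum>l<m. c l i * y2 l))) = 0"
    using Suc by blast
  define r where "r i = v i - (\<Sum>l<m. c l i * y1 l)" for i
  define s where "s i = c m i - (\<Sum>l<m. c l i * y2 l)" for i
  obtain a where a: "(\<Sum>i<n. s i * (r i - a * s i)) = 0"
    using projection_onto_line by blast
  define y where "y l = (if l < m then y1 l - a * y2 l else a)" for l
  have residual: "v i - (\<Sum>l<Suc m. c l i * y l) = r i - a * s i" for i
    by (simp add: y_def r_def s_def sum_subtractf sum_distrib_left algebra_simps)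
  have old: "(\<Sum>i<n. c j i * (r i - a * s i)) = 0" if "j < m" for j
  proof -
    have "(\<Sum>i<n. c j i * (r i - a * s i)) = (\<Sum>i<n. c j i * r i) - a * (\<Sum>i<n. c j i * s i)"
      by (simp add: sum_subtractf sum_distrib_left algebra_simps)
    then show ?thesis using y1 y2 that by (simp add: r_def s_def)
  qed
  have new: "(\<Sum>i<n. c m i * (r i - a * s i)) = 0"
  proof -
    have "(\<Sum>i<n. c m i * (r i - a * s i)) = (\<Sum>i<n. s i * (r i - a * s i))
        + (\<Sum>l<m. y2 l * (\<Sum>i<n. c l i * (r i - a * s i)))"
      by (simp add: s_def algebra_simps sum.distrib sum_subtractf sum_distrib_left
          sum_distrib_right sum.swap[of _ "{..<n}"])
    then show ?thesis using a old by simp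
  qed
  show ?case
    using old new by (intro exI[of _ y]) (simp only: residual, auto simp: less_Suc_eq)
qed

lemma sym_mat_normal_equations:
  fixes M :: "real mat"
  assumes M: "M \<in> carrier_mat n n" and sym: "transpose_mat M = M" and v: "v \<in> carrier_vec n"
  shows "\<exists>y\<in>carrier_vec n. M *\<^sub>v (v - M *\<^sub>v y) = 0\<^sub>v n"
proof -
  obtain y where y: "\<forall>j<n. (\<Sum>i<n. M $$ (i,j) * (v $ i - (\<Sum>l<n. M $$ (i,l) * y l))) = 0"
    using normal_equations_solvable[where m=n and n=n and c="\<lambda>l i. M $$ (i,l)"] by blast
  define yv where "yv = vec n y"
  have yv: "yv \<in> carrier_vec n" and r: "v - M *\<^sub>v yv \<in> carrier_vec n"
    using M v by (auto simp: yv_def)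
  have r_index: "(v - M *\<^sub>v yv) $ i = v $ i - (\<Sum>l<n. M $$ (i,l) * y l)" if "i < n" for i
  proof -
    have "(M *\<^sub>v yv) $ i = (\<Sum>l<n. M $$ (i,l) * y l)"
      unfolding mult_mat_vec_index_sum[OF M yv that] by (simp add: yv_def)
    then show ?thesis using that M v by simp
  qed
  have sym_index: "M $$ (j,i) = M $$ (i,j)" if "i < n" "j < n" for i j
    using that M arg_cong[OF sym, of "\<lambda>A. A $$ (i,j)"] by simp
  have "M *\<^sub>v (v - M *\<^sub>v yv) = 0\<^sub>v n"
  proof (rule eq_vecI)
    fix j assume "j < dim_vec (0\<^sub>v n :: real vec)"
    then have j: "j < n" by simp
    have "(M *\<^sub>v (v - M *\<^sub>v yv)) $ j = (\<Sum>i<n. M $$ (i,j) * (v $ i - (\<Sum>l<n. M $$ (i,l) * y l)))"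
      using j by (simp add: mult_mat_vec_index_sum[OF M r] r_index sym_index)
    then show "(M *\<^sub>v (v - M *\<^sub>v yv)) $ j = 0\<^sub>v n $ j" using y j by simp
  qed (use M in simp)
  then show ?thesis using yv by blast
qed

lemma sym_mat_range_if_orthogonal_kernel:
  fixes M :: "real mat"
  assumes M: "M \<in> carrier_mat n n" and sym: "transpose_mat M = M" and v: "v \<in> carrier_vec n"
    and orth: "\<And>z. z \<in> carrier_vec n \<Longrightarrow> M *\<^sub>v z = 0\<^sub>v n \<Longrightarrow> v \<bullet> z = 0"
  shows "\<exists>y\<in>carrier_vec n. M *\<^sub>v y = v"
proof -
  obtain y where y: "y \<in> carrier_vec n" and Mr: "M *\<^sub>v (v - M *\<^sub>v y) = 0\<^sub>v n"
    using sym_mat_normal_equations[OF M sym v] by blast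
  define r where "r = v - M *\<^sub>v y"
  have r: "r \<in> carrier_vec n" using M v y by (simp add: r_def)
  have "(M *\<^sub>v y) \<bullet> r = r \<bullet> (M *\<^sub>v y)"
    using M y r by (intro comm_scalar_prod) auto
  also have "\<dots> = y \<bullet> (M *\<^sub>v r)" by (rule sym_mat_scalar_prod_swap[OF M sym r y])
  finally have "(M *\<^sub>v y) \<bullet> r = 0" using Mr y by (simp add: r_def)
  then have "r \<bullet> r = 0"
    using orth[OF r Mr[folded r_def]] minus_scalar_prod_distrib[OF v _ r, of "M *\<^sub>v y"] M y
    by (simp add: r_def[symmetric])
  then have "v - M *\<^sub>v y = 0\<^sub>v n" using scalar_prod_self_eq_0_real[OF r] by (simp add: r_def)
  then have "v = M *\<^sub>v y" by (rule minus_vec_eq_0_imp_eq[OF v mult_mat_vec_carrier[OF M y]])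
  then show ?thesis using y by auto
qed

lemma sym_mat_kernel_range_trivial:
  fixes M :: "real mat"
  assumes M: "M \<in> carrier_mat n n" and sym: "transpose_mat M = M" and y: "y \<in> carrier_vec n"
    and ker: "M *\<^sub>v (M *\<^sub>v y) = 0\<^sub>v n"
  shows "M *\<^sub>v y = 0\<^sub>v n"
proof -
  have "(M *\<^sub>v y) \<bullet> (M *\<^sub>v y) = y \<bullet> (M *\<^sub>v (M *\<^sub>v y))"
    using sym_mat_scalar_prod_swap[OF M sym _ y, of "M *\<^sub>v y"] M y by simp
  then show ?thesis using ker y M by (intro scalar_prod_self_eq_0_real) auto
qed

lemma mat_mult_solvable_by_columns:
  assumes A: "A \<in> carrier_mat n k" and B: "B \<in> carrier_mat n m"
    and sol: "\<And>b. b < m \<Longrightarrow> \<exists>y\<in>carrier_vec k. A *\<^sub>v y = col B b"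
  shows "\<exists>Y\<in>carrier_mat k m. A * Y = B"
proof -
  obtain y where y: "\<And>b. b < m \<Longrightarrow> y b \<in> carrier_vec k \<and> A *\<^sub>v y b = col B b"
    using sol by metis
  define Y where "Y = mat k m (\<lambda>(i,b). y b $ i)"
  have Y: "Y \<in> carrier_mat k m" by (simp add: Y_def)
  have "col (A * Y) b = col B b" if "b < m" for b
  proof -
    have "col Y b = y b" using y[OF that] that by (auto simp: Y_def col_mat)
    then show ?thesis using col_mult2[OF A Y that] y[OF that] by simp
  qed
  then have "A * Y = B" using A B Y by (intro mat_col_eqI) auto
  then show ?thesis using Y by blast
qed

lemma mult_mat_unit_vec:
  fixes M :: "'a :: comm_ring_1 mat"
  assumes "M \<in> carrier_mat n m" and "b < m"
  shows "M *\<^sub>v unit_vec m b = col M b"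
  using assms by (intro eq_vecI) (auto simp: scalar_prod_right_unit[where n=m])

lemma sym_mat_square_solvable:
  fixes M :: "real mat"
  assumes M: "M \<in> carrier_mat n n" and sym: "transpose_mat M = M"
  shows "\<exists>Y\<in>carrier_mat n n. M * M * Y = M"
proof -
  have MM: "M * M \<in> carrier_mat n n" and symMM: "transpose_mat (M * M) = M * M"
    using M sym by (auto simp: transpose_mult[OF M M])
  have "\<exists>y\<in>carrier_vec n. (M * M) *\<^sub>v y = col M b" if b: "b < n" for b
  proof (rule sym_mat_range_if_orthogonal_kernel[OF MM symMM])
    show "col M b \<in> carrier_vec n" using M by (intro carrier_vecI) simp
    fix z :: "real vec" assume z: "z \<in> carrier_vec n" and "(M * M) *\<^sub>v z = 0\<^sub>v n"
    then have "M *\<^sub>v z = 0\<^sub>v n"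
      using M by (intro sym_mat_kernel_range_trivial[OF M sym z]) auto
    moreover have "col M b \<bullet> z = (M *\<^sub>v z) $ b"
      using b M col_transpose[of b M] sym by simp
    ultimately show "col M b \<bullet> z = 0" using b by simp
  qed
  then show ?thesis using mat_mult_solvable_by_columns[OF MM M] by blast
qed

text \<open>The columns of \<open>M * Y * M - M\<close> lie both in the range and in the kernel of \<open>M\<close>.\<close>

lemma sym_mat_sandwich_of_square_solution:
  fixes M Y :: "real mat"
  assumes M: "M \<in> carrier_mat n n" and sym: "transpose_mat M = M"
    and Y: "Y \<in> carrier_mat n n" and MMY: "M * M * Y = M"
  shows "M * Y * M = M"
proof (rule mat_col_eqI)
  fix b assume "b < dim_col M"
  then have b: "b < n" using M by simp
  define c where "c = col M b"
  have c: "c \<in> carrier_vec n" and c_eq: "c = M *\<^sub>v unit_vec n b"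
    using M b by (auto simp: c_def mult_mat_unit_vec)
  define w where "w = Y *\<^sub>v c - unit_vec n b"
  have w: "w \<in> carrier_vec n" using Y c by (simp add: w_def)
  have Yc: "Y *\<^sub>v c \<in> carrier_vec n" and MYc: "M *\<^sub>v (Y *\<^sub>v c) \<in> carrier_vec n"
    using M Y c by auto
  have "M *\<^sub>v w = M *\<^sub>v (Y *\<^sub>v c) - M *\<^sub>v unit_vec n b"
    unfolding w_def by (rule mult_minus_distrib_mat_vec[OF M Yc]) simp
  then have Mw: "M *\<^sub>v w = M *\<^sub>v (Y *\<^sub>v c) - c" by (simp only: c_eq[symmetric])
  have "M *\<^sub>v (M *\<^sub>v (Y *\<^sub>v c)) = (M * M * Y) *\<^sub>v c"
    using M Y Yc c by (simp only: assoc_mult_mat_vec[OF M M Yc, symmetric]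
        assoc_mult_mat_vec[OF mult_carrier_mat[OF M M] Y c, symmetric])
  then have "M *\<^sub>v (M *\<^sub>v w) = M *\<^sub>v c - M *\<^sub>v c"
    unfolding Mw MMY by (simp only: mult_minus_distrib_mat_vec[OF M MYc c])
  then have "M *\<^sub>v (M *\<^sub>v w) = 0\<^sub>v n"
    using M c by (simp only: minus_cancel_vec mult_mat_vec_carrier)
  then have "M *\<^sub>v w = 0\<^sub>v n" by (rule sym_mat_kernel_range_trivial[OF M sym w])
  then have "M *\<^sub>v (Y *\<^sub>v c) - c = 0\<^sub>v n" by (simp only: Mw)
  then have MYc_eq: "M *\<^sub>v (Y *\<^sub>v c) = c" by (rule minus_vec_eq_0_imp_eq[OF MYc c])
  have "col (M * Y * M) b = (M * Y) *\<^sub>v c"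
    unfolding c_def by (rule col_mult2[OF mult_carrier_mat[OF M Y] M b])
  also have "\<dots> = c" by (simp only: assoc_mult_mat_vec[OF M Y c] MYc_eq)
  finally show "col (M * Y * M) b = col M b" by (simp only: c_def)
qed (use M Y in auto)

lemma sym_mat_ginv:
  fixes M :: "real mat"
  assumes M: "M \<in> carrier_mat n n" and sym: "transpose_mat M = M"
  shows "ginv M \<in> carrier_mat n n" and "M * ginv M * M = M"
proof -
  obtain Y where "Y \<in> carrier_mat n n" and "M * M * Y = M"
    using sym_mat_square_solvable[OF M sym] by blast
  then have "\<exists>G. G \<in> carrier_mat (dim_col M) (dim_row M) \<and> M * G * M = M"
    using M sym_mat_sandwich_of_square_solution[OF M sym] by auto
  from someI_ex[OF this] show "ginv M \<in> carrier_mat n n" and "M * ginv M * M = M"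
    using M by (auto simp: ginv_def)
qed

lemma colspace_sub_factor:
  fixes M A :: "real mat"
  assumes M: "M \<in> carrier_mat n n" and A: "A \<in> carrier_mat n s" and cs: "colspace_sub A M"
  shows "\<exists>Z\<in>carrier_mat n s. A = M * Z"
proof -
  have "\<exists>y\<in>carrier_vec n. M *\<^sub>v y = col A b" if "b < s" for b
    using cs that A M mult_mat_unit_vec[OF A that] unfolding colspace_sub_def
    by (metis carrier_matD(2) unit_vec_carrier)
  then show ?thesis using mat_mult_solvable_by_columns[OF M A] by metis
qed

lemma colspace_sub_if_kernel_sub:
  fixes M M' A :: "real mat"
  assumes M: "M \<in> carrier_mat n n" and M': "M' \<in> carrier_mat n n"
    and sym: "transpose_mat M = M" and sym': "transpose_mat M' = M'"
    and A: "A \<in> carrier_mat n s"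
    and ker: "\<And>z. z \<in> carrier_vec n \<Longrightarrow> M' *\<^sub>v z = 0\<^sub>v n \<Longrightarrow> M *\<^sub>v z = 0\<^sub>v n"
    and cs: "colspace_sub A M"
  shows "colspace_sub A M'"
  unfolding colspace_sub_def
proof
  fix x :: "real vec" assume "x \<in> carrier_vec (dim_col A)"
  then obtain y where y: "y \<in> carrier_vec n" and Axy: "A *\<^sub>v x = M *\<^sub>v y"
    using cs M unfolding colspace_sub_def by auto
  have "\<exists>y'\<in>carrier_vec n. M' *\<^sub>v y' = A *\<^sub>v x"
  proof (rule sym_mat_range_if_orthogonal_kernel[OF M' sym'])
    show "A *\<^sub>v x \<in> carrier_vec n" using Axy M y by simp
    fix z :: "real vec" assume z: "z \<in> carrier_vec n" and "M' *\<^sub>v z = 0\<^sub>v n"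
    then have "M *\<^sub>v z = 0\<^sub>v n" by (rule ker)
    then show "(A *\<^sub>v x) \<bullet> z = 0"
      using Axy sym_mat_scalar_prod_swap[OF M sym z y] M y z
      by (metis comm_scalar_prod mult_mat_vec_carrier scalar_prod_right_zero)
  qed
  then obtain y' where "y' \<in> carrier_vec n" and "M' *\<^sub>v y' = A *\<^sub>v x" by blast
  then show "\<exists>y'\<in>carrier_vec (dim_col M'). A *\<^sub>v x = M' *\<^sub>v y'"
    using M' by (intro bexI[of _ y']) auto
qed

lemma minv_inverse:
  fixes B :: "real mat"
  assumes B: "B \<in> carrier_mat s s"
    and inj: "\<And>z. z \<in> carrier_vec s \<Longrightarrow> B *\<^sub>v z = 0\<^sub>v s \<Longrightarrow> z = 0\<^sub>v s"
  shows "minv B \<in> carrier_mat s s" and "B * minv B = 1\<^sub>m s" and "minv B * B = 1\<^sub>m s"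
proof -
  have "det B \<noteq> 0" using det_0_iff_vec_prod_zero[OF B] inj by auto
  then obtain C where "C \<in> carrier_mat s s" "C * B = 1\<^sub>m s" "B * C = 1\<^sub>m s"
    using det_non_zero_imp_unit[OF B] unfolding Units_def ring_mat_def by auto
  then have "\<exists>C. C \<in> carrier_mat (dim_row B) (dim_row B) \<and> B * C = 1\<^sub>m (dim_row B) \<and>
      C * B = 1\<^sub>m (dim_row B)" using B by auto
  from someI_ex[OF this]
  show "minv B \<in> carrier_mat s s" and "B * minv B = 1\<^sub>m s" and "minv B * B = 1\<^sub>m s"
    using B by (auto simp: minv_def)
qed

lemma transpose_inverse_sym_mat:
  fixes B N :: "'a :: comm_ring_1 mat"
  assumes B: "B \<in> carrier_mat s s" and N: "N \<in> carrier_mat s s"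
    and sym: "transpose_mat B = B" and BN: "B * N = 1\<^sub>m s"
  shows "transpose_mat N = N"
proof -
  have "transpose_mat N * B = 1\<^sub>m s"
    using arg_cong[OF BN, of transpose_mat] transpose_mult[OF B N] sym by simp
  then have "transpose_mat N = transpose_mat N * (B * N)" using BN N by simp
  also have "\<dots> = N" using assoc_mult_mat[of "transpose_mat N" s s B s N] B N
    \<open>transpose_mat N * B = 1\<^sub>m s\<close> by simp
  finally show ?thesis .
qed

lemma nnd_quadratic_form_zero:
  assumes M: "nnd n M" and u: "u \<in> carrier_vec n" and q: "u \<bullet> (M *\<^sub>v u) = 0"
  shows "M *\<^sub>v u = 0\<^sub>v n"
proof -
  have Mc: "M \<in> carrier_mat n n" and sym: "transpose_mat M = M"
    and psd: "\<And>x. x \<in> carrier_vec n \<Longrightarrow> x \<bullet> (M *\<^sub>v x) \<ge> 0"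
    using M by (auto simp: nnd_def)
  define v where "v = M *\<^sub>v u"
  have v: "v \<in> carrier_vec n" using Mc u by (simp add: v_def)
  define a where "a = v \<bullet> v"
  define b where "b = v \<bullet> (M *\<^sub>v v)"
  have b: "b \<ge> 0" using psd[OF v] by (simp add: b_def)
  \<comment> \<open>the form is nonnegative along the line \<open>u + t v\<close>, which is only possible if \<open>a = 0\<close>\<close>
  have line: "(u + t \<cdot>\<^sub>v v) \<bullet> (M *\<^sub>v (u + t \<cdot>\<^sub>v v)) = 2 * t * a + t\<^sup>2 * b" for t
  proof -
    have "u \<bullet> (M *\<^sub>v v) = a"
      using sym_mat_scalar_prod_swap[OF Mc sym u v] v by (simp add: a_def v_def)
    moreover have "v \<bullet> (M *\<^sub>v u) = a" by (simp add: a_def v_def)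
    ultimately show ?thesis
      using Mc u v q by (simp add: mult_add_distrib_mat_vec mult_mat_vec add_scalar_prod_distrib
          scalar_prod_add_distrib b_def power2_eq_square algebra_simps)
  qed
  define t where "t = - a / (b + 1)"
  have tb: "t * (b + 1) = - a" using b by (simp add: t_def)
  have "0 \<le> 2 * t * a + t\<^sup>2 * b"
    using psd[of "u + t \<cdot>\<^sub>v v"] u v line by simp
  also have "\<dots> \<le> 2 * t * a + t * (t * (b + 1))"
    by (simp add: power2_eq_square algebra_simps)
  also have "\<dots> = t * a" unfolding tb by simp
  finally have "0 \<le> (t * a) * (b + 1)" using b by simp
  then have "0 \<le> (t * (b + 1)) * a" by (simp only: ac_simps)
  then have "a\<^sup>2 \<le> 0" unfolding tb by (simp add: power2_eq_square)
  then have "a = 0" by simp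
  then show ?thesis using scalar_prod_self_eq_0_real[OF v] by (simp add: a_def v_def)
qed

text \<open>Pythagoras for the semi-inner product given by \<open>M\<close>.\<close>

lemma nnd_quadratic_form_min:
  assumes M: "nnd n M" and u: "u \<in> carrier_vec n" and u0: "u0 \<in> carrier_vec n"
    and orth: "u0 \<bullet> (M *\<^sub>v (u - u0)) = 0"
  shows "u0 \<bullet> (M *\<^sub>v u0) \<le> u \<bullet> (M *\<^sub>v u)"
proof -
  have Mc: "M \<in> carrier_mat n n" and sym: "transpose_mat M = M"
    and psd: "\<And>x. x \<in> carrier_vec n \<Longrightarrow> x \<bullet> (M *\<^sub>v x) \<ge> 0"
    using M by (auto simp: nnd_def)
  define w where "w = u - u0"
  have w: "w \<in> carrier_vec n" and u_eq: "u = u0 + w" using u u0 by (auto simp: w_def)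
  have "u0 \<bullet> (M *\<^sub>v w) = 0" using orth by (simp add: w_def)
  moreover have "w \<bullet> (M *\<^sub>v u0) = 0"
    using orth sym_mat_scalar_prod_swap[OF Mc sym w u0] by (simp add: w_def)
  moreover have "u \<bullet> (M *\<^sub>v u) = (u0 + w) \<bullet> (M *\<^sub>v u0 + M *\<^sub>v w)"
    using Mc u0 w by (simp add: u_eq mult_add_distrib_mat_vec)
  ultimately have "u \<bullet> (M *\<^sub>v u) = u0 \<bullet> (M *\<^sub>v u0) + w \<bullet> (M *\<^sub>v w)"
    using Mc u0 w by (simp add: add_scalar_prod_distrib scalar_prod_add_distrib)
  then show ?thesis using psd[OF w] by simp
qed

section \<open>Information matrices\<close>

lemma ginv_sandwich:
  fixes M Z :: "real mat"
  assumes M: "M \<in> carrier_mat n n" and sym: "transpose_mat M = M" and Z: "Z \<in> carrier_mat n s"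
  shows "transpose_mat (M * Z) * ginv M * (M * Z) = transpose_mat Z * (M * Z)"
proof -
  have G: "ginv M \<in> carrier_mat n n" and MGM: "M * ginv M * M = M"
    using sym_mat_ginv[OF M sym] by auto
  have ZT: "transpose_mat Z \<in> carrier_mat s n" and MG: "M * ginv M \<in> carrier_mat n n"
    and MZ: "M * Z \<in> carrier_mat n s" using M G Z by auto
  have "transpose_mat (M * Z) * ginv M * (M * Z) = transpose_mat Z * M * ginv M * (M * Z)"
    by (simp add: transpose_mult[OF M Z] sym)
  also have "\<dots> = transpose_mat Z * ((M * ginv M) * (M * Z))"
    by (simp only: assoc_mult_mat[OF ZT M G] assoc_mult_mat[OF ZT MG MZ])
  also have "\<dots> = transpose_mat Z * ((M * ginv M * M) * Z)"
    by (simp only: assoc_mult_mat[OF MG M Z])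
  finally show ?thesis by (simp only: MGM)
qed

lemma constrained_quadratic_form_min:
  fixes M Z N :: "real mat"
  assumes M: "nnd n M" and Z: "Z \<in> carrier_mat n s" and N: "N \<in> carrier_mat s s"
    and inv: "transpose_mat Z * (M * Z) * N = 1\<^sub>m s" and x: "x \<in> carrier_vec s"
  defines "u0 \<equiv> Z *\<^sub>v (N *\<^sub>v x)"
  shows "transpose_mat (M * Z) *\<^sub>v u0 = x" and "u0 \<bullet> (M *\<^sub>v u0) = x \<bullet> (N *\<^sub>v x)"
    and "\<And>u. u \<in> carrier_vec n \<Longrightarrow> transpose_mat (M * Z) *\<^sub>v u = x \<Longrightarrow>
      x \<bullet> (N *\<^sub>v x) \<le> u \<bullet> (M *\<^sub>v u)"
proof -
  have Mc: "M \<in> carrier_mat n n" and sym: "transpose_mat M = M" using M by (auto simp: nnd_def)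
  have Nx: "N *\<^sub>v x \<in> carrier_vec s" and u0: "u0 \<in> carrier_vec n"
    using N Z x by (auto simp: u0_def)
  have constraint: "transpose_mat (M * Z) *\<^sub>v u = transpose_mat Z *\<^sub>v (M *\<^sub>v u)"
    if "u \<in> carrier_vec n" for u
    using that Mc Z by (simp add: transpose_mult[OF Mc Z] sym)
  have ZT: "transpose_mat Z \<in> carrier_mat s n" and MZ: "M * Z \<in> carrier_mat n s"
    and ZTMZ: "transpose_mat Z * (M * Z) \<in> carrier_mat s s" using Mc Z by auto
  have "transpose_mat Z *\<^sub>v (M *\<^sub>v u0) = (transpose_mat Z * (M * Z) * N) *\<^sub>v x"
    using assoc_mult_mat_vec[OF ZTMZ N x] assoc_mult_mat_vec[OF ZT MZ Nx]
      assoc_mult_mat_vec[OF Mc Z Nx] by (simp add: u0_def)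
  then show Au0: "transpose_mat (M * Z) *\<^sub>v u0 = x"
    using x by (simp add: constraint[OF u0] inv)
  have scalar_M_u0: "y \<bullet> u0 = (transpose_mat Z *\<^sub>v y) \<bullet> (N *\<^sub>v x)" if "y \<in> carrier_vec n" for y
    using transpose_vec_mult_scalar[OF Z Nx that] by (simp add: u0_def)
  have "u0 \<bullet> (M *\<^sub>v u0) = (M *\<^sub>v u0) \<bullet> u0"
    using Mc u0 by (intro comm_scalar_prod) auto
  also have "\<dots> = x \<bullet> (N *\<^sub>v x)"
    using scalar_M_u0[of "M *\<^sub>v u0"] Mc u0 Au0 constraint[OF u0] by simp
  finally show u0_form: "u0 \<bullet> (M *\<^sub>v u0) = x \<bullet> (N *\<^sub>v x)" .
  fix u assume u: "u \<in> carrier_vec n" and Au: "transpose_mat (M * Z) *\<^sub>v u = x"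
  have "transpose_mat Z *\<^sub>v (M *\<^sub>v (u - u0)) = 0\<^sub>v s"
    using Mc Z u u0 Au Au0 x
    by (simp add: constraint mult_minus_distrib_mat_vec minus_cancel_vec)
  then have "(M *\<^sub>v (u - u0)) \<bullet> u0 = 0"
    using scalar_M_u0[of "M *\<^sub>v (u - u0)"] Mc u u0 Nx by simp
  then have "u0 \<bullet> (M *\<^sub>v (u - u0)) = 0"
    using Mc u u0 comm_scalar_prod[of u0 n "M *\<^sub>v (u - u0)"] by simp
  then show "x \<bullet> (N *\<^sub>v x) \<le> u \<bullet> (M *\<^sub>v u)"
    using nnd_quadratic_form_min[OF M u u0] u0_form by simp
qed

lemma gram_mat_injective:
  fixes M Z :: "real mat"
  assumes M: "nnd n M" and Z: "Z \<in> carrier_mat n s" and rk: "full_col_rank (M * Z)"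
    and z: "z \<in> carrier_vec s" and Bz: "(transpose_mat Z * (M * Z)) *\<^sub>v z = 0\<^sub>v s"
  shows "z = 0\<^sub>v s"
proof -
  have Mc: "M \<in> carrier_mat n n" using M by (simp add: nnd_def)
  have Zz: "Z *\<^sub>v z \<in> carrier_vec n" using Z z by simp
  have ZT: "transpose_mat Z \<in> carrier_mat s n" and MZ: "M * Z \<in> carrier_mat n s"
    using Mc Z by auto
  have "(Z *\<^sub>v z) \<bullet> (M *\<^sub>v (Z *\<^sub>v z)) = (transpose_mat Z *\<^sub>v (M *\<^sub>v (Z *\<^sub>v z))) \<bullet> z"
    using transpose_vec_mult_scalar[OF Z z, of "M *\<^sub>v (Z *\<^sub>v z)"] Mc Zz
    by (simp add: comm_scalar_prod[of _ n])
  also have "\<dots> = z \<bullet> ((transpose_mat Z * (M * Z)) *\<^sub>v z)"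
    using assoc_mult_mat_vec[OF ZT MZ z] assoc_mult_mat_vec[OF Mc Z z] Mc Z z
    by (simp add: comm_scalar_prod[of _ s])
  finally have "(Z *\<^sub>v z) \<bullet> (M *\<^sub>v (Z *\<^sub>v z)) = z \<bullet> ((transpose_mat Z * (M * Z)) *\<^sub>v z)" .
  then have "M *\<^sub>v (Z *\<^sub>v z) = 0\<^sub>v n"
    using Bz z by (intro nnd_quadratic_form_zero[OF M Zz]) simp
  then show ?thesis
    using rk z Mc Z unfolding full_col_rank_def by simp
qed

lemma info_mat_quadratic_form:
  fixes M A :: "real mat"
  assumes M: "nnd n M" and A: "A \<in> carrier_mat n s" and rk: "full_col_rank A"
    and cs: "colspace_sub A M"
  defines "N \<equiv> minv (transpose_mat A * ginv M * A)"
  shows "nnd s N"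
    and "\<And>x. x \<in> carrier_vec s \<Longrightarrow>
      \<exists>u\<in>carrier_vec n. transpose_mat A *\<^sub>v u = x \<and> u \<bullet> (M *\<^sub>v u) = x \<bullet> (N *\<^sub>v x)"
    and "\<And>x u. x \<in> carrier_vec s \<Longrightarrow> u \<in> carrier_vec n \<Longrightarrow> transpose_mat A *\<^sub>v u = x \<Longrightarrow>
      x \<bullet> (N *\<^sub>v x) \<le> u \<bullet> (M *\<^sub>v u)"
proof -
  have Mc: "M \<in> carrier_mat n n" and sym: "transpose_mat M = M"
    and psd: "\<And>u. u \<in> carrier_vec n \<Longrightarrow> u \<bullet> (M *\<^sub>v u) \<ge> 0"
    using M by (auto simp: nnd_def)
  obtain Z where Z: "Z \<in> carrier_mat n s" and AMZ: "A = M * Z"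
    using colspace_sub_factor[OF Mc A cs] by blast
  define B where "B = transpose_mat Z * (M * Z)"
  have B: "B \<in> carrier_mat s s" using Mc Z by (simp add: B_def)
  have "transpose_mat B = transpose_mat Z * M * Z"
    using Mc Z by (simp add: B_def transpose_mult[of _ s n "M * Z" s] transpose_mult[OF Mc Z] sym)
  then have symB: "transpose_mat B = B"
    using assoc_mult_mat[of "transpose_mat Z" s n M n Z s] Mc Z by (simp add: B_def)
  have N_eq: "N = minv B"
    unfolding N_def AMZ B_def by (simp only: ginv_sandwich[OF Mc sym Z])
  have inj: "\<And>z. z \<in> carrier_vec s \<Longrightarrow> B *\<^sub>v z = 0\<^sub>v s \<Longrightarrow> z = 0\<^sub>v s"
    using gram_mat_injective[OF M Z] rk by (simp add: AMZ B_def)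
  have N: "N \<in> carrier_mat s s" and BN: "B * N = 1\<^sub>m s"
    using minv_inverse[OF B inj] by (auto simp: N_eq)
  note min = constrained_quadratic_form_min[OF M Z N BN[unfolded B_def], folded AMZ]
  show attained: "\<exists>u\<in>carrier_vec n. transpose_mat A *\<^sub>v u = x \<and> u \<bullet> (M *\<^sub>v u) = x \<bullet> (N *\<^sub>v x)"
    if "x \<in> carrier_vec s" for x
    using min(1,2)[OF that] Z N that by auto
  show "x \<bullet> (N *\<^sub>v x) \<le> u \<bullet> (M *\<^sub>v u)"
    if "x \<in> carrier_vec s" "u \<in> carrier_vec n" "transpose_mat A *\<^sub>v u = x" for x u
    using min(3)[OF that] .
  have "x \<bullet> (N *\<^sub>v x) \<ge> 0" if "x \<in> carrier_vec s" for x
    using attained[OF that] psd by force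
  then show "nnd s N"
    using N transpose_inverse_sym_mat[OF B N symB BN] by (simp add: nnd_def)
qed

lemma info_mat_symmetrization_bound:
  fixes Mx Me A S :: "real mat"
  assumes Mx: "nnd n Mx" and Me: "nnd n Me"
    and A: "A \<in> carrier_mat n s" and rk: "full_col_rank A" and cs: "colspace_sub A Mx"
    and S: "S \<in> carrier_mat s s"
    and dom: "\<And>u. u \<in> carrier_vec n \<Longrightarrow> \<exists>u'\<in>carrier_vec n.
      transpose_mat A *\<^sub>v u' = S *\<^sub>v (transpose_mat A *\<^sub>v u) \<and>
      (u \<bullet> (Mx *\<^sub>v u) + u' \<bullet> (Mx *\<^sub>v u')) / 2 \<le> u \<bullet> (Me *\<^sub>v u)"
  defines "Nx \<equiv> minv (transpose_mat A * ginv Mx * A)"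
    and "Ne \<equiv> minv (transpose_mat A * ginv Me * A)"
  shows "colspace_sub A Me"
    and "\<And>x. x \<in> carrier_vec s \<Longrightarrow>
      (x \<bullet> (Nx *\<^sub>v x) + (S *\<^sub>v x) \<bullet> (Nx *\<^sub>v (S *\<^sub>v x))) / 2 \<le> x \<bullet> (Ne *\<^sub>v x)"
proof -
  have Mxc: "Mx \<in> carrier_mat n n" and Mxsym: "transpose_mat Mx = Mx"
    and Mxpsd: "\<And>u. u \<in> carrier_vec n \<Longrightarrow> u \<bullet> (Mx *\<^sub>v u) \<ge> 0"
    using Mx by (auto simp: nnd_def)
  have Mec: "Me \<in> carrier_mat n n" and Mesym: "transpose_mat Me = Me"
    using Me by (auto simp: nnd_def)
  have ker: "Mx *\<^sub>v z = 0\<^sub>v n" if z: "z \<in> carrier_vec n" and "Me *\<^sub>v z = 0\<^sub>v n" for z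
  proof -
    obtain u' where "u' \<in> carrier_vec n"
      and "(z \<bullet> (Mx *\<^sub>v z) + u' \<bullet> (Mx *\<^sub>v u')) / 2 \<le> z \<bullet> (Me *\<^sub>v z)"
      using dom[OF z] by blast
    then have "z \<bullet> (Mx *\<^sub>v z) = 0"
      using Mxpsd[OF z] Mxpsd[of u'] \<open>Me *\<^sub>v z = 0\<^sub>v n\<close> z by simp
    then show ?thesis by (rule nnd_quadratic_form_zero[OF Mx z])
  qed
  show cs': "colspace_sub A Me"
    by (rule colspace_sub_if_kernel_sub[OF Mxc Mec Mxsym Mesym A ker cs])
  note Nx_form = info_mat_quadratic_form[OF Mx A rk cs, folded Nx_def]
  note Ne_form = info_mat_quadratic_form[OF Me A rk cs', folded Ne_def]
  fix x :: "real vec" assume x: "x \<in> carrier_vec s"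
  obtain u where u: "u \<in> carrier_vec n" and Au: "transpose_mat A *\<^sub>v u = x"
    and u_form: "u \<bullet> (Me *\<^sub>v u) = x \<bullet> (Ne *\<^sub>v x)"
    using Ne_form(2)[OF x] by blast
  obtain u' where u': "u' \<in> carrier_vec n" and Au': "transpose_mat A *\<^sub>v u' = S *\<^sub>v x"
    and avg: "(u \<bullet> (Mx *\<^sub>v u) + u' \<bullet> (Mx *\<^sub>v u')) / 2 \<le> u \<bullet> (Me *\<^sub>v u)"
    using dom[OF u] Au by blast
  have "x \<bullet> (Nx *\<^sub>v x) \<le> u \<bullet> (Mx *\<^sub>v u)" by (rule Nx_form(3)[OF x u Au])
  moreover have "(S *\<^sub>v x) \<bullet> (Nx *\<^sub>v (S *\<^sub>v x)) \<le> u' \<bullet> (Mx *\<^sub>v u')"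
    using S x by (intro Nx_form(3)[OF _ u' Au']) simp
  ultimately show "(x \<bullet> (Nx *\<^sub>v x) + (S *\<^sub>v x) \<bullet> (Nx *\<^sub>v (S *\<^sub>v x))) / 2 \<le> x \<bullet> (Ne *\<^sub>v x)"
    using avg u_form by simp
qed

section \<open>Information functions\<close>

lemma nnd_smult:
  assumes c: "(c::real) \<ge> 0" and C: "nnd s C"
  shows "nnd s (c \<cdot>\<^sub>m C)"
proof -
  have Cc: "C \<in> carrier_mat s s" and CT: "transpose_mat C = C"
    and Cq: "\<And>x. x \<in> carrier_vec s \<Longrightarrow> x \<bullet> (C *\<^sub>v x) \<ge> 0" using C by (auto simp: nnd_def)
  have "x \<bullet> ((c \<cdot>\<^sub>m C) *\<^sub>v x) = c * (x \<bullet> (C *\<^sub>v x))" if x: "x \<in> carrier_vec s" for x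
    using quadratic_form_sum[of "c \<cdot>\<^sub>m C" s x] quadratic_form_sum[OF Cc x] Cc x
    by (simp add: sum_distrib_left ac_simps)
  moreover have "transpose_mat (c \<cdot>\<^sub>m C) = c \<cdot>\<^sub>m C"
  proof (rule eq_matI)
    fix i j assume "i < dim_row (c \<cdot>\<^sub>m C)" "j < dim_col (c \<cdot>\<^sub>m C)"
    then show "transpose_mat (c \<cdot>\<^sub>m C) $$ (i,j) = (c \<cdot>\<^sub>m C) $$ (i,j)"
      using Cc arg_cong[OF CT, of "\<lambda>A. A $$ (i,j)"] by simp
  qed (use Cc in auto)
  ultimately show ?thesis
    using Cc c Cq by (auto simp: nnd_def)
qed

lemma nnd_add:
  assumes C: "nnd s C" and D: "nnd s D"
  shows "nnd s (C + D)"
proof -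
  have Cc: "C \<in> carrier_mat s s" and Dc: "D \<in> carrier_mat s s"
    using C D by (auto simp: nnd_def)
  have "x \<bullet> ((C + D) *\<^sub>v x) = x \<bullet> (C *\<^sub>v x) + x \<bullet> (D *\<^sub>v x)" if x: "x \<in> carrier_vec s" for x
    using Cc Dc x by (simp add: add_mult_distrib_mat_vec scalar_prod_add_distrib[of _ s])
  then show ?thesis
    using C D Cc Dc by (auto simp: nnd_def transpose_add intro!: add_nonneg_nonneg)
qed

lemma information_function_concave:
  assumes "information_function s \<Phi>" and "nnd s C" and "nnd s D" and "0 \<le> t" and "t \<le> 1"
  shows "(1 - t) * \<Phi> C + t * \<Phi> D \<le> \<Phi> ((1 - t) \<cdot>\<^sub>m C + t \<cdot>\<^sub>m D)"
  using assms unfolding information_function_def by blast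

lemma information_function_superadditive:
  assumes Phi: "information_function s \<Phi>" and C: "nnd s C" and D: "nnd s D"
  shows "\<Phi> C + \<Phi> D \<le> \<Phi> (C + D)"
proof -
  have hom: "\<Phi> (2 \<cdot>\<^sub>m C) = 2 * \<Phi> C" "\<Phi> (2 \<cdot>\<^sub>m D) = 2 * \<Phi> D"
    using Phi C D unfolding information_function_def by auto
  have "C + D = (1 - 1/2) \<cdot>\<^sub>m (2 \<cdot>\<^sub>m C) + (1/2) \<cdot>\<^sub>m (2 \<cdot>\<^sub>m D)"
    using C D by (intro eq_matI) (auto simp: nnd_def)
  moreover have "(1 - 1/2) * \<Phi> (2 \<cdot>\<^sub>m C) + (1/2) * \<Phi> (2 \<cdot>\<^sub>m D)
      \<le> \<Phi> ((1 - 1/2) \<cdot>\<^sub>m (2 \<cdot>\<^sub>m C) + (1/2) \<cdot>\<^sub>m (2 \<cdot>\<^sub>m D))"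
    using nnd_smult[OF _ C, of 2] nnd_smult[OF _ D, of 2]
    by (intro information_function_concave[OF Phi]) auto
  ultimately show ?thesis using hom by simp
qed

lemma information_function_mono:
  assumes Phi: "information_function s \<Phi>" and C: "nnd s C" and D: "nnd s D"
  shows "\<Phi> C \<le> \<Phi> (C + D)"
proof -
  have "\<Phi> D \<ge> 0" using Phi D unfolding information_function_def by auto
  then show ?thesis using information_function_superadditive[OF Phi C D] by linarith
qed

lemma nnd_congruence:
  fixes N S :: "real mat"
  assumes N: "nnd s N" and S: "S \<in> carrier_mat s t" and x: "x \<in> carrier_vec t"
  shows "x \<bullet> ((transpose_mat S * N * S) *\<^sub>v x) = (S *\<^sub>v x) \<bullet> (N *\<^sub>v (S *\<^sub>v x))"
proof -
  have Nc: "N \<in> carrier_mat s s" using N by (simp add: nnd_def)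
  have STN: "transpose_mat S * N \<in> carrier_mat t s" and Sx: "S *\<^sub>v x \<in> carrier_vec s"
    using Nc S x by auto
  have "(transpose_mat S * N * S) *\<^sub>v x = transpose_mat S *\<^sub>v (N *\<^sub>v (S *\<^sub>v x))"
    using assoc_mult_mat_vec[OF STN S x]
      assoc_mult_mat_vec[of "transpose_mat S" t s N s, OF _ Nc Sx] S
    by simp
  then show ?thesis
    using transpose_vec_mult_scalar[OF S x, of "N *\<^sub>v (S *\<^sub>v x)"] Nc S x
    by (simp add: comm_scalar_prod[of x t "transpose_mat S *\<^sub>v (N *\<^sub>v (S *\<^sub>v x))"]
        comm_scalar_prod[of "N *\<^sub>v (S *\<^sub>v x)" s "S *\<^sub>v x"])
qed

lemma nnd_congruence_nnd:
  fixes N S :: "real mat"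
  assumes N: "nnd s N" and S: "S \<in> carrier_mat s t"
  shows "nnd t (transpose_mat S * N * S)"
proof -
  have Nc: "N \<in> carrier_mat s s" and sym: "transpose_mat N = N"
    and psd: "\<And>x. x \<in> carrier_vec s \<Longrightarrow> x \<bullet> (N *\<^sub>v x) \<ge> 0"
    using N by (auto simp: nnd_def)
  have ST: "transpose_mat S \<in> carrier_mat t s" and STN: "transpose_mat S * N \<in> carrier_mat t s"
    using Nc S by auto
  have "transpose_mat (transpose_mat S * N * S) = transpose_mat S * (N * S)"
    using transpose_mult[OF STN S] transpose_mult[OF ST Nc] sym by simp
  then have "transpose_mat (transpose_mat S * N * S) = transpose_mat S * N * S"
    using assoc_mult_mat[OF ST Nc S] by simp
  then show ?thesis
    using Nc S psd nnd_congruence[OF N S] by (auto simp: nnd_def)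
qed

lemma eigenvalue_based_involution_invariant:
  fixes N S :: "real mat"
  assumes Phi: "eigenvalue_based s \<Phi>" and N: "nnd s N"
    and S: "S \<in> carrier_mat s s" and symS: "transpose_mat S = S" and SS: "S * S = 1\<^sub>m s"
  shows "\<Phi> (S * N * S) = \<Phi> N"
proof -
  have Nc: "N \<in> carrier_mat s s" using N by (simp add: nnd_def)
  have "similar_mat_wit (S * N * S) N S S"
    unfolding similar_mat_wit_def Let_def using S Nc SS by auto
  then have "similar_mat (S * N * S) N" unfolding similar_mat_def by blast
  then have "char_poly (S * N * S) = char_poly N" by (rule char_poly_similar)
  moreover have "nnd s (S * N * S)" using nnd_congruence_nnd[OF N S] symS by simp
  ultimately show ?thesis using Phi N unfolding eigenvalue_based_def by metis
qed

lemma information_function_ge_if_symmetrization_le: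
  fixes N N' S :: "real mat"
  assumes Phi: "information_function s \<Phi>" and eig: "eigenvalue_based s \<Phi>"
    and N: "nnd s N" and N': "nnd s N'"
    and S: "S \<in> carrier_mat s s" and symS: "transpose_mat S = S" and SS: "S * S = 1\<^sub>m s"
    and le: "\<And>x. x \<in> carrier_vec s \<Longrightarrow>
      (x \<bullet> (N *\<^sub>v x) + (S *\<^sub>v x) \<bullet> (N *\<^sub>v (S *\<^sub>v x))) / 2 \<le> x \<bullet> (N' *\<^sub>v x)"
  shows "\<Phi> N \<le> \<Phi> N'"
proof -
  have Nc: "N \<in> carrier_mat s s" and N'c: "N' \<in> carrier_mat s s" and symN': "transpose_mat N' = N'"
    using N N' by (auto simp: nnd_def)
  define SNS where "SNS = S * N * S"
  have SNS: "nnd s SNS" and SNS_form: "\<And>x. x \<in> carrier_vec s \<Longrightarrow>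
      x \<bullet> (SNS *\<^sub>v x) = (S *\<^sub>v x) \<bullet> (N *\<^sub>v (S *\<^sub>v x))"
    using nnd_congruence_nnd[OF N S] nnd_congruence[OF N S] symS by (auto simp: SNS_def)
  define C where "C = (1 - 1/2) \<cdot>\<^sub>m N + (1/2) \<cdot>\<^sub>m SNS"
  have C: "nnd s C" unfolding C_def by (intro nnd_add nnd_smult N SNS) auto
  then have Cc: "C \<in> carrier_mat s s" and symC: "transpose_mat C = C" by (auto simp: nnd_def)
  have "x \<bullet> ((N' - C) *\<^sub>v x) \<ge> 0" if x: "x \<in> carrier_vec s" for x
  proof -
    have SNSc: "SNS \<in> carrier_mat s s" using SNS by (simp add: nnd_def)
    have "x \<bullet> (C *\<^sub>v x) = (x \<bullet> (N *\<^sub>v x) + x \<bullet> (SNS *\<^sub>v x)) / 2"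
      using quadratic_form_sum[OF Cc x] quadratic_form_sum[OF Nc x] quadratic_form_sum[OF SNSc x]
        Nc SNSc by (simp add: C_def algebra_simps sum.distrib sum_divide_distrib[symmetric])
    moreover have "x \<bullet> ((N' - C) *\<^sub>v x) = x \<bullet> (N' *\<^sub>v x) - x \<bullet> (C *\<^sub>v x)"
      using N'c Cc x by (simp add: minus_mult_distrib_mat_vec scalar_prod_minus_distrib[of x s])
    ultimately have "x \<bullet> ((N' - C) *\<^sub>v x)
        = x \<bullet> (N' *\<^sub>v x) - (x \<bullet> (N *\<^sub>v x) + x \<bullet> (SNS *\<^sub>v x)) / 2" by simp
    then show ?thesis using le[OF x] SNS_form[OF x] by simp
  qed
  then have D: "nnd s (N' - C)"
    using N'c Cc symN' symC by (auto simp: nnd_def transpose_minus)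
  have "N' = C + (N' - C)" using N'c Cc by (intro eq_matI) auto
  then have "\<Phi> C \<le> \<Phi> N'" using information_function_mono[OF Phi C D] by simp
  moreover have "(1 - 1/2) * \<Phi> N + (1/2) * \<Phi> SNS \<le> \<Phi> C"
    unfolding C_def by (rule information_function_concave[OF Phi N SNS]) auto
  moreover have "\<Phi> SNS = \<Phi> N"
    unfolding SNS_def by (rule eigenvalue_based_involution_invariant[OF eig N S symS SS])
  ultimately show ?thesis by simp
qed

section \<open>The two-factor model\<close>

lemma sum_lessThan_add_split:
  fixes F :: "nat \<Rightarrow> 'a :: comm_monoid_add"
  shows "(\<Sum>b<m + n. F b) = (\<Sum>b<m. F b) + (\<Sum>j<n. F (m + j))"
  by (induction n) (simp_all add: ac_simps)

lemma fvec_scalar_prod: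
  assumes i: "i < v1" and gk: "g k \<in> carrier_vec v2" and u: "u \<in> carrier_vec (v1 + 1 + v2)"
  shows "fvec v1 g i k \<bullet> u = u $ i + u $ v1 + (\<Sum>j<v2. g k $ j * u $ (v1 + 1 + j))"
proof -
  have "fvec v1 g i k \<bullet> u = (\<Sum>a<v1 + 1 + v2. fvec v1 g i k $ a * u $ a)"
    using u by (simp add: scalar_prod_def atLeast0LessThan)
  also have "\<dots> = (\<Sum>a<v1. fvec v1 g i k $ a * u $ a) + fvec v1 g i k $ v1 * u $ v1
      + (\<Sum>j<v2. fvec v1 g i k $ (v1 + 1 + j) * u $ (v1 + 1 + j))"
    unfolding sum_lessThan_add_split[of _ "v1 + 1" v2] by simp
  also have "\<dots> = u $ i + u $ v1 + (\<Sum>j<v2. g k $ j * u $ (v1 + 1 + j))"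
    using i gk by (simp add: fvec_def unit_vec_def if_distrib[of "\<lambda>x. x * _"] sum.If_cases)
  finally show ?thesis .
qed

lemma moment_mat_carrier: "moment_mat v1 v2 d lam g \<xi> \<in> carrier_mat (v1 + 1 + v2) (v1 + 1 + v2)"
  by (simp add: moment_mat_def)

lemma quadratic_form_of_sum_of_squares:
  fixes u :: "real vec" and f :: "nat \<Rightarrow> nat \<Rightarrow> real vec"
  assumes u: "u \<in> carrier_vec n"
  shows "(\<Sum>a<n. \<Sum>b<n. u $ a * (\<Sum>i<p. \<Sum>k<q. c i k * f i k $ a * f i k $ b) * u $ b) =
    (\<Sum>i<p. \<Sum>k<q. c i k * (f i k \<bullet> u)\<^sup>2)"
proof -
  have dot: "f i k \<bullet> u = (\<Sum>a<n. f i k $ a * u $ a)" for i k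
    using u by (simp add: scalar_prod_def atLeast0LessThan)
  show ?thesis
    by (simp add: dot power2_eq_square sum_distrib_left sum_distrib_right ac_simps
        sum.swap[of _ "{..<n}" "{..<p}"] sum.swap[of _ "{..<n}" "{..<q}"])
qed

lemma moment_mat_quadratic_form:
  assumes u: "u \<in> carrier_vec (v1 + 1 + v2)"
  shows "u \<bullet> (moment_mat v1 v2 d lam g \<xi> *\<^sub>v u) =
    (\<Sum>i<v1. \<Sum>k<d. \<xi> i k * lam i * (fvec v1 g i k \<bullet> u)\<^sup>2)"
proof -
  let ?n = "v1 + 1 + v2"
  have "u \<bullet> (moment_mat v1 v2 d lam g \<xi> *\<^sub>v u) =
      (\<Sum>a<?n. \<Sum>b<?n. u $ a * moment_mat v1 v2 d lam g \<xi> $$ (a, b) * u $ b)"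
    by (rule quadratic_form_sum[OF moment_mat_carrier u])
  also have "\<dots> = (\<Sum>a<?n. \<Sum>b<?n.
      u $ a * (\<Sum>i<v1. \<Sum>k<d. \<xi> i k * lam i * fvec v1 g i k $ a * fvec v1 g i k $ b) * u $ b)"
    by (intro sum.cong refl) (simp add: moment_mat_def)
  finally show ?thesis by (simp only: quadratic_form_of_sum_of_squares[OF u])
qed

lemma moment_mat_nnd:
  assumes \<xi>: "\<forall>i<v1. \<forall>k<d. \<xi> i k \<ge> 0" and lam: "\<forall>i<v1. lam i > 0"
  shows "nnd (v1 + 1 + v2) (moment_mat v1 v2 d lam g \<xi>)"
proof -
  have "transpose_mat (moment_mat v1 v2 d lam g \<xi>) = moment_mat v1 v2 d lam g \<xi>"
    by (rule eq_matI) (auto simp: moment_mat_def ac_simps)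
  moreover have "u \<bullet> (moment_mat v1 v2 d lam g \<xi> *\<^sub>v u) \<ge> 0" if "u \<in> carrier_vec (v1 + 1 + v2)" for u
    unfolding moment_mat_quadratic_form[OF that] using \<xi> lam
    by (intro sum_nonneg) (simp add: less_imp_le)
  ultimately show ?thesis using moment_mat_carrier by (auto simp: nnd_def)
qed

text \<open>The coefficient matrix \<open>A = diag(Q\<^sub>1, Q\<^sub>2)\<close> with \<open>Q\<^sub>2 = (0; K)\<close>; the empty blocks of
  width \<open>0\<close> only serve to put the zero row of \<open>Q\<^sub>2\<close> (the row of \<open>\<mu>\<close>) on top of \<open>K\<close>.\<close>

definition coef_mat :: "real mat \<Rightarrow> real mat \<Rightarrow> nat \<Rightarrow> nat \<Rightarrow> nat \<Rightarrow> nat \<Rightarrow> real mat" where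
  "coef_mat Q1 K v1 v2 s1 s2 = four_block_mat Q1 (0\<^sub>m v1 s2) (0\<^sub>m (1 + v2) s1)
     (four_block_mat (0\<^sub>m 1 s2) (0\<^sub>m 1 0) K (0\<^sub>m v2 0))"

lemma coef_mat_carrier:
  assumes "Q1 \<in> carrier_mat v1 s1" and "K \<in> carrier_mat v2 s2"
  shows "coef_mat Q1 K v1 v2 s1 s2 \<in> carrier_mat (v1 + 1 + v2) (s1 + s2)"
  using assms by (intro carrier_matI) (auto simp: coef_mat_def)

lemma coef_mat_index:
  assumes Q1: "Q1 \<in> carrier_mat v1 s1" and K: "K \<in> carrier_mat v2 s2"
    and a: "a < v1 + 1 + v2" and b: "b < s1 + s2"
  shows "coef_mat Q1 K v1 v2 s1 s2 $$ (a,b) =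
    (if a < v1 \<and> b < s1 then Q1 $$ (a,b)
     else if v1 < a \<and> s1 \<le> b then K $$ (a - v1 - 1, b - s1) else 0)"
proof -
  have lower: "four_block_mat (0\<^sub>m 1 s2) (0\<^sub>m 1 0) K (0\<^sub>m v2 0) $$ (a', b') =
      (if a' < 1 then 0 else K $$ (a' - 1, b'))" if "a' < 1 + v2" "b' < s2" for a' b'
    using that K by (simp add: index_mat_four_block)
  show ?thesis
    using Q1 K a b by (cases "a < v1"; cases "b < s1")
      (auto simp: coef_mat_def index_mat_four_block(1) lower)
qed

lemma coef_mat_mult_vec:
  assumes Q1: "Q1 \<in> carrier_mat v1 s1" and K: "K \<in> carrier_mat v2 s2"
    and x: "x \<in> carrier_vec (s1 + s2)"
  shows "\<And>a. a < v1 \<Longrightarrow> (coef_mat Q1 K v1 v2 s1 s2 *\<^sub>v x) $ a = (Q1 *\<^sub>v vec s1 (\<lambda>b. x $ b)) $ a"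
    and "\<And>j. j < v2 \<Longrightarrow>
      (coef_mat Q1 K v1 v2 s1 s2 *\<^sub>v x) $ (v1 + 1 + j) = (K *\<^sub>v vec s2 (\<lambda>b. x $ (s1 + b))) $ j"
proof -
  let ?A = "coef_mat Q1 K v1 v2 s1 s2"
  have split: "(?A *\<^sub>v x) $ a =
      (\<Sum>b<s1. ?A $$ (a,b) * x $ b) + (\<Sum>j<s2. ?A $$ (a, s1 + j) * x $ (s1 + j))"
    if "a < v1 + 1 + v2" for a
    using mult_mat_vec_index_sum[OF coef_mat_carrier[OF Q1 K] x that]
    by (simp add: sum_lessThan_add_split)
  show "(?A *\<^sub>v x) $ a = (Q1 *\<^sub>v vec s1 (\<lambda>b. x $ b)) $ a" if "a < v1" for a
    using split[of a] that Q1 K mult_mat_vec_index_sum[OF Q1 _ that, of "vec s1 (\<lambda>b. x $ b)"]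
    by (simp add: coef_mat_index)
  show "(?A *\<^sub>v x) $ (v1 + 1 + j) = (K *\<^sub>v vec s2 (\<lambda>b. x $ (s1 + b))) $ j" if "j < v2" for j
    using split[of "v1 + 1 + j"] that Q1 K
      mult_mat_vec_index_sum[OF K _ that, of "vec s2 (\<lambda>b. x $ (s1 + b))"]
    by (simp add: coef_mat_index)
qed

lemma coef_mat_full_col_rank:
  assumes Q1: "Q1 \<in> carrier_mat v1 s1" and K: "K \<in> carrier_mat v2 s2"
    and rQ: "full_col_rank Q1" and rK: "full_col_rank K"
  shows "full_col_rank (coef_mat Q1 K v1 v2 s1 s2)"
  unfolding full_col_rank_def
proof (intro ballI impI)
  let ?A = "coef_mat Q1 K v1 v2 s1 s2"
  have A: "?A \<in> carrier_mat (v1 + 1 + v2) (s1 + s2)" by (rule coef_mat_carrier[OF Q1 K])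
  fix x :: "real vec" assume "x \<in> carrier_vec (dim_col ?A)" and "?A *\<^sub>v x = 0\<^sub>v (dim_row ?A)"
  then have x: "x \<in> carrier_vec (s1 + s2)" and Ax: "?A *\<^sub>v x = 0\<^sub>v (v1 + 1 + v2)" using A by auto
  define x1 where "x1 = vec s1 (\<lambda>b. x $ b)"
  define x2 where "x2 = vec s2 (\<lambda>b. x $ (s1 + b))"
  have "Q1 *\<^sub>v x1 = 0\<^sub>v v1"
    using Q1 coef_mat_mult_vec(1)[OF Q1 K x] arg_cong[OF Ax, of "\<lambda>v. v $ _"]
    by (intro eq_vecI) (auto simp: x1_def)
  then have x1: "x1 = 0\<^sub>v s1" using rQ Q1 unfolding full_col_rank_def by (auto simp: x1_def)
  have "K *\<^sub>v x2 = 0\<^sub>v v2"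
    using K coef_mat_mult_vec(2)[OF Q1 K x] arg_cong[OF Ax, of "\<lambda>v. v $ _"]
    by (intro eq_vecI) (auto simp: x2_def)
  then have x2: "x2 = 0\<^sub>v s2" using rK K unfolding full_col_rank_def by (auto simp: x2_def)
  have "x $ b = 0" if "b < s1 + s2" for b
  proof (cases "b < s1")
    case True
    then show ?thesis using arg_cong[OF x1, of "\<lambda>v. v $ b"] by (simp add: x1_def)
  next
    case False
    then have "s1 + (b - s1) = b" by simp
    then show ?thesis using that False arg_cong[OF x2, of "\<lambda>v. v $ (b - s1)"] by (simp add: x2_def)
  qed
  then show "x = 0\<^sub>v (dim_col ?A)" using x A by (intro eq_vecI) auto
qed

definition reflection_mat :: "nat \<Rightarrow> nat \<Rightarrow> real mat" where
  "reflection_mat s1 s2 =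
     mat (s1 + s2) (s1 + s2) (\<lambda>(a,b). if a = b then (if a < s1 then 1 else -1) else 0)"

lemma reflection_mat_carrier: "reflection_mat s1 s2 \<in> carrier_mat (s1 + s2) (s1 + s2)"
  by (simp add: reflection_mat_def)

lemma reflection_mat_symmetric: "transpose_mat (reflection_mat s1 s2) = reflection_mat s1 s2"
  by (rule eq_matI) (auto simp: reflection_mat_def)

lemma reflection_mat_mult_vec:
  assumes y: "y \<in> carrier_vec (s1 + s2)" and b: "b < s1 + s2"
  shows "(reflection_mat s1 s2 *\<^sub>v y) $ b = (if b < s1 then y $ b else - y $ b)"
proof -
  have "(reflection_mat s1 s2 *\<^sub>v y) $ b = (\<Sum>c<s1 + s2. reflection_mat s1 s2 $$ (b,c) * y $ c)"
    by (rule mult_mat_vec_index_sum[OF reflection_mat_carrier y b])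
  also have "\<dots> = (\<Sum>c<s1 + s2. if c = b then (if b < s1 then y $ b else - y $ b) else 0)"
    using b by (intro sum.cong) (auto simp: reflection_mat_def)
  finally show ?thesis using b by simp
qed

lemma reflection_mat_involution: "reflection_mat s1 s2 * reflection_mat s1 s2 = 1\<^sub>m (s1 + s2)"
proof (rule eq_matI)
  fix a b assume "a < dim_row (1\<^sub>m (s1 + s2) :: real mat)" "b < dim_col (1\<^sub>m (s1 + s2) :: real mat)"
  then have a: "a < s1 + s2" and b: "b < s1 + s2" by auto
  let ?S = "reflection_mat s1 s2"
  have S: "?S \<in> carrier_mat (s1 + s2) (s1 + s2)" by (rule reflection_mat_carrier)
  have "(?S * ?S) $$ (a,b) = (?S *\<^sub>v col ?S b) $ a" using a b S by simp
  also have "\<dots> = (if a < s1 then col ?S b $ a else - col ?S b $ a)"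
    by (rule reflection_mat_mult_vec[OF _ a]) (use S in \<open>simp add: carrier_vecI\<close>)
  also have "\<dots> = 1\<^sub>m (s1 + s2) $$ (a,b)" using a b by (auto simp: reflection_mat_def)
  finally show "(?S * ?S) $$ (a,b) = 1\<^sub>m (s1 + s2) $$ (a,b)" .
qed (auto simp: reflection_mat_def)

lemma coef_mat_transpose_reflect:
  assumes Q1: "Q1 \<in> carrier_mat v1 s1" and K: "K \<in> carrier_mat v2 s2"
    and u: "u \<in> carrier_vec (v1 + 1 + v2)" and u': "u' \<in> carrier_vec (v1 + 1 + v2)"
    and same: "\<And>a. a < v1 \<Longrightarrow> u' $ a = u $ a"
    and neg: "\<And>a. v1 < a \<Longrightarrow> a < v1 + 1 + v2 \<Longrightarrow> u' $ a = - u $ a"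
  shows "transpose_mat (coef_mat Q1 K v1 v2 s1 s2) *\<^sub>v u' =
    reflection_mat s1 s2 *\<^sub>v (transpose_mat (coef_mat Q1 K v1 v2 s1 s2) *\<^sub>v u)"
proof -
  let ?A = "coef_mat Q1 K v1 v2 s1 s2"
  have AT: "transpose_mat ?A \<in> carrier_mat (s1 + s2) (v1 + 1 + v2)"
    using coef_mat_carrier[OF Q1 K] by simp
  have ATu: "transpose_mat ?A *\<^sub>v u \<in> carrier_vec (s1 + s2)" using AT u by simp
  have index: "(transpose_mat ?A *\<^sub>v w) $ b = (\<Sum>a<v1 + 1 + v2. ?A $$ (a,b) * w $ a)"
    if "w \<in> carrier_vec (v1 + 1 + v2)" "b < s1 + s2" for w b
    using mult_mat_vec_index_sum[OF AT that] that coef_mat_carrier[OF Q1 K] by simp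
  show ?thesis
  proof (rule eq_vecI)
    fix b assume "b < dim_vec (reflection_mat s1 s2 *\<^sub>v (transpose_mat ?A *\<^sub>v u))"
    then have b: "b < s1 + s2" by (simp add: reflection_mat_def)
    have "(\<Sum>a<v1 + 1 + v2. ?A $$ (a,b) * u' $ a) =
        (if b < s1 then (\<Sum>a<v1 + 1 + v2. ?A $$ (a,b) * u $ a)
         else - (\<Sum>a<v1 + 1 + v2. ?A $$ (a,b) * u $ a))"
      using b Q1 K same neg by (auto simp: coef_mat_index sum_negf[symmetric] intro!: sum.cong)
    then show "(transpose_mat ?A *\<^sub>v u') $ b =
        (reflection_mat s1 s2 *\<^sub>v (transpose_mat ?A *\<^sub>v u)) $ b"
      using b by (simp add: index[OF u' b] index[OF u b] reflection_mat_mult_vec[OF ATu b])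
  qed (use AT in \<open>simp add: reflection_mat_def\<close>)
qed

section \<open>Product designs\<close>

lemma square_sum_shift_average:
  fixes c :: "nat \<Rightarrow> nat \<Rightarrow> real" and p r :: "nat \<Rightarrow> real" and t :: real
  shows "((\<Sum>i<m. \<Sum>k<d. c i k * (p i + r k)\<^sup>2) + (\<Sum>i<m. \<Sum>k<d. c i k * (p i + 2 * t - r k)\<^sup>2)) / 2
    = (\<Sum>i<m. (\<Sum>k<d. c i k) * (p i + t)\<^sup>2) + (\<Sum>k<d. (\<Sum>i<m. c i k) * (r k - t)\<^sup>2)"
proof -
  have average: "((a + b)\<^sup>2 + (a + 2 * t - b)\<^sup>2) / 2 = (a + t)\<^sup>2 + (b - t)\<^sup>2" for a b :: real
    by (simp add: power2_eq_square field_simps)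
  have "((\<Sum>i<m. \<Sum>k<d. c i k * (p i + r k)\<^sup>2) + (\<Sum>i<m. \<Sum>k<d. c i k * (p i + 2 * t - r k)\<^sup>2)) / 2
      = (\<Sum>i<m. \<Sum>k<d. c i k * (((p i + r k)\<^sup>2 + (p i + 2 * t - r k)\<^sup>2) / 2))"
    by (simp add: sum_divide_distrib sum.distrib[symmetric] algebra_simps add_divide_distrib)
  also have "\<dots> = (\<Sum>i<m. (\<Sum>k<d. c i k) * (p i + t)\<^sup>2) + (\<Sum>k<d. (\<Sum>i<m. c i k) * (r k - t)\<^sup>2)"
    by (simp add: average distrib_left sum.distrib sum_distrib_right sum.swap[of _ "{..<d}"])
  finally show ?thesis .
qed

text \<open>For \<open>t = (R - P) / (2 L)\<close> the average falls short of the right-hand side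
  by \<open>(P + R)\<^sup>2 / (2 L)\<close>.\<close>

lemma mean_shift_square_sum_le:
  fixes m d :: nat and c :: "nat \<Rightarrow> nat \<Rightarrow> real" and p r :: "nat \<Rightarrow> real"
  defines "L \<equiv> \<Sum>i<m. \<Sum>k<d. c i k"
  assumes L: "L > 0"
  shows "\<exists>t. ((\<Sum>i<m. \<Sum>k<d. c i k * (p i + r k)\<^sup>2) + (\<Sum>i<m. \<Sum>k<d. c i k * (p i + 2 * t - r k)\<^sup>2)) / 2
    \<le> (\<Sum>i<m. \<Sum>k<d. (\<Sum>k'<d. c i k') * (\<Sum>i'<m. c i' k) / L * (p i + r k)\<^sup>2)"
proof -
  define W where "W i = (\<Sum>k<d. c i k)" for i
  define V where "V k = (\<Sum>i<m. c i k)" for k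
  define P where "P = (\<Sum>i<m. W i * p i)"
  define R where "R = (\<Sum>k<d. V k * r k)"
  define X where "X = (\<Sum>i<m. W i * (p i)\<^sup>2)"
  define Y where "Y = (\<Sum>k<d. V k * (r k)\<^sup>2)"
  define t where "t = (R - P) / (2 * L)"
  have sumW: "(\<Sum>i<m. W i) = L" and sumV: "(\<Sum>k<d. V k) = L"
    by (simp_all add: W_def V_def L_def sum.swap[of _ "{..<d}"])
  have "((\<Sum>i<m. \<Sum>k<d. c i k * (p i + r k)\<^sup>2) + (\<Sum>i<m. \<Sum>k<d. c i k * (p i + 2 * t - r k)\<^sup>2)) / 2
      = (\<Sum>i<m. W i * (p i + t)\<^sup>2) + (\<Sum>k<d. V k * (r k - t)\<^sup>2)"
    unfolding square_sum_shift_average W_def V_def ..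
  also have "(\<Sum>i<m. W i * (p i + t)\<^sup>2) = X + 2 * t * P + t\<^sup>2 * L"
    by (simp add: X_def P_def sumW[symmetric] power2_eq_square algebra_simps sum.distrib
        sum_distrib_left)
  also have "(\<Sum>k<d. V k * (r k - t)\<^sup>2) = Y - 2 * t * R + t\<^sup>2 * L"
    by (simp add: Y_def R_def sumV[symmetric] power2_eq_square algebra_simps sum.distrib
        sum_subtractf sum_distrib_left)
  finally have lhs: "((\<Sum>i<m. \<Sum>k<d. c i k * (p i + r k)\<^sup>2)
      + (\<Sum>i<m. \<Sum>k<d. c i k * (p i + 2 * t - r k)\<^sup>2)) / 2
      = X + 2 * t * P + t\<^sup>2 * L + (Y - 2 * t * R + t\<^sup>2 * L)" .
  have "(\<Sum>i<m. \<Sum>k<d. (\<Sum>k'<d. c i k') * (\<Sum>i'<m. c i' k) / L * (p i + r k)\<^sup>2)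
      = (\<Sum>i<m. \<Sum>k<d. W i * V k / L * ((p i)\<^sup>2 + 2 * p i * r k + (r k)\<^sup>2))"
    by (simp add: W_def V_def power2_eq_square algebra_simps)
  also have "\<dots> = X * (\<Sum>k<d. V k) / L + 2 * P * R / L + Y * (\<Sum>i<m. W i) / L"
    by (simp add: X_def Y_def P_def R_def algebra_simps sum.distrib sum_distrib_left
        sum_distrib_right sum_divide_distrib sum.swap[of _ "{..<d}"])
  finally have rhs: "(\<Sum>i<m. \<Sum>k<d. (\<Sum>k'<d. c i k') * (\<Sum>i'<m. c i' k) / L * (p i + r k)\<^sup>2)
      = X + 2 * P * R / L + Y" using L by (simp add: sumV sumW)
  have "X + 2 * t * P + t\<^sup>2 * L + (Y - 2 * t * R + t\<^sup>2 * L) + (P + R)\<^sup>2 / (2 * L)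
      = X + 2 * P * R / L + Y"
    using L by (simp add: t_def field_simps power2_eq_square)
  moreover have "(P + R)\<^sup>2 / (2 * L) \<ge> 0" using L by simp
  ultimately show ?thesis using lhs rhs by (intro exI[of _ t]) linarith
qed

definition treatment_marginal :: "nat \<Rightarrow> (nat \<Rightarrow> nat \<Rightarrow> real) \<Rightarrow> nat \<Rightarrow> real" where
  "treatment_marginal d \<xi> i = (\<Sum>k<d. \<xi> i k)"

definition weighted_covariate_marginal ::
    "nat \<Rightarrow> nat \<Rightarrow> (nat \<Rightarrow> real) \<Rightarrow> (nat \<Rightarrow> nat \<Rightarrow> real) \<Rightarrow> nat \<Rightarrow> real" where
  "weighted_covariate_marginal v1 d lam \<xi> k =
     (\<Sum>i<v1. \<xi> i k * lam i) / (\<Sum>i<v1. \<Sum>k<d. \<xi> i k * lam i)"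

lemma product_design_weight:
  "treatment_marginal d \<xi> i * weighted_covariate_marginal v1 d lam \<xi> k * lam i =
    (\<Sum>k'<d. \<xi> i k' * lam i) * (\<Sum>i'<v1. \<xi> i' k * lam i') / (\<Sum>i<v1. \<Sum>k<d. \<xi> i k * lam i)"
proof -
  have "(\<Sum>k'<d. \<xi> i k' * lam i) = treatment_marginal d \<xi> i * lam i"
    by (simp add: treatment_marginal_def sum_distrib_right)
  then show ?thesis by (simp add: weighted_covariate_marginal_def ac_simps)
qed

lemma product_design_symmetrization:
  fixes \<xi> :: "nat \<Rightarrow> nat \<Rightarrow> real" and lam :: "nat \<Rightarrow> real" and g :: "nat \<Rightarrow> real vec"
  assumes g_dim: "\<forall>k<d. g k \<in> carrier_vec v2"
    and Q1: "Q1 \<in> carrier_mat v1 s1" and K: "K \<in> carrier_mat v2 s2"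
    and L_pos: "(\<Sum>i<v1. \<Sum>k<d. \<xi> i k * lam i) > 0"
    and u: "u \<in> carrier_vec (v1 + 1 + v2)"
  defines "A \<equiv> coef_mat Q1 K v1 v2 s1 s2"
    and "w \<equiv> treatment_marginal d \<xi>" and "\<alpha> \<equiv> weighted_covariate_marginal v1 d lam \<xi>"
  shows "\<exists>u'\<in>carrier_vec (v1 + 1 + v2).
    transpose_mat A *\<^sub>v u' = reflection_mat s1 s2 *\<^sub>v (transpose_mat A *\<^sub>v u) \<and>
    (u \<bullet> (moment_mat v1 v2 d lam g \<xi> *\<^sub>v u) + u' \<bullet> (moment_mat v1 v2 d lam g \<xi> *\<^sub>v u')) / 2
      \<le> u \<bullet> (moment_mat v1 v2 d lam g (\<lambda>i k. w i * \<alpha> k) *\<^sub>v u)"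
proof -
  define p where "p i = u $ i + u $ v1" for i
  define r where "r k = (\<Sum>j<v2. g k $ j * u $ (v1 + 1 + j))" for k
  obtain t where t: "((\<Sum>i<v1. \<Sum>k<d. \<xi> i k * lam i * (p i + r k)\<^sup>2)
      + (\<Sum>i<v1. \<Sum>k<d. \<xi> i k * lam i * (p i + 2 * t - r k)\<^sup>2)) / 2
    \<le> (\<Sum>i<v1. \<Sum>k<d. (\<Sum>k'<d. \<xi> i k' * lam i) * (\<Sum>i'<v1. \<xi> i' k * lam i')
        / (\<Sum>i<v1. \<Sum>k<d. \<xi> i k * lam i) * (p i + r k)\<^sup>2)"
    using mean_shift_square_sum_le[where m=v1 and d=d and c="\<lambda>i k. \<xi> i k * lam i" and p=p and r=r]
      L_pos by blast
  define u' where "u' = vec (v1 + 1 + v2)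
    (\<lambda>a. if a < v1 then u $ a else if a = v1 then u $ v1 + 2 * t else - u $ a)"
  have u': "u' \<in> carrier_vec (v1 + 1 + v2)" by (simp add: u'_def)
  have fu: "fvec v1 g i k \<bullet> u = p i + r k" if "i < v1" "k < d" for i k
    using fvec_scalar_prod[OF that(1) _ u] g_dim that by (simp add: p_def r_def)
  have fu': "fvec v1 g i k \<bullet> u' = p i + 2 * t - r k" if "i < v1" "k < d" for i k
    using fvec_scalar_prod[OF that(1) _ u'] g_dim that
    by (simp add: u'_def p_def r_def sum_negf[symmetric])
  have q1: "u \<bullet> (moment_mat v1 v2 d lam g \<xi> *\<^sub>v u) =
      (\<Sum>i<v1. \<Sum>k<d. \<xi> i k * lam i * (p i + r k)\<^sup>2)"
    unfolding moment_mat_quadratic_form[OF u] by (intro sum.cong refl) (simp add: fu)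
  have q2: "u' \<bullet> (moment_mat v1 v2 d lam g \<xi> *\<^sub>v u') =
      (\<Sum>i<v1. \<Sum>k<d. \<xi> i k * lam i * (p i + 2 * t - r k)\<^sup>2)"
    unfolding moment_mat_quadratic_form[OF u'] by (intro sum.cong refl) (simp add: fu')
  have q3: "u \<bullet> (moment_mat v1 v2 d lam g (\<lambda>i k. w i * \<alpha> k) *\<^sub>v u) =
      (\<Sum>i<v1. \<Sum>k<d. (\<Sum>k'<d. \<xi> i k' * lam i) * (\<Sum>i'<v1. \<xi> i' k * lam i')
        / (\<Sum>i<v1. \<Sum>k<d. \<xi> i k * lam i) * (p i + r k)\<^sup>2)"
    unfolding moment_mat_quadratic_form[OF u]
    by (intro sum.cong refl) (simp add: fu w_def \<alpha>_def product_design_weight)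
  show ?thesis
  proof (intro bexI[of _ u'] conjI)
    show "transpose_mat A *\<^sub>v u' = reflection_mat s1 s2 *\<^sub>v (transpose_mat A *\<^sub>v u)"
      unfolding A_def by (rule coef_mat_transpose_reflect[OF Q1 K u u']) (auto simp: u'_def)
    show "(u \<bullet> (moment_mat v1 v2 d lam g \<xi> *\<^sub>v u) + u' \<bullet> (moment_mat v1 v2 d lam g \<xi> *\<^sub>v u')) / 2
      \<le> u \<bullet> (moment_mat v1 v2 d lam g (\<lambda>i k. w i * \<alpha> k) *\<^sub>v u)"
      unfolding q1 q2 q3 by (rule t)
  qed (rule u')
qed

lemma marginal_product_design:
  fixes \<xi> :: "nat \<Rightarrow> nat \<Rightarrow> real" and lam :: "nat \<Rightarrow> real"
  assumes \<xi>: "is_design v1 d \<xi>" and lam_pos: "\<forall>i<v1. lam i > 0"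
  defines "w \<equiv> treatment_marginal d \<xi>" and "\<alpha> \<equiv> weighted_covariate_marginal v1 d lam \<xi>"
  shows "(\<Sum>i<v1. \<Sum>k<d. \<xi> i k * lam i) > 0" and "prob_vec v1 w" and "prob_vec d \<alpha>"
    and "is_design v1 d (\<lambda>i k. w i * \<alpha> k)"
proof -
  define L where "L = (\<Sum>i<v1. \<Sum>k<d. \<xi> i k * lam i)"
  have \<xi>_nonneg: "\<forall>i<v1. \<forall>k<d. \<xi> i k \<ge> 0" and \<xi>_sum: "(\<Sum>i<v1. \<Sum>k<d. \<xi> i k) = 1"
    using \<xi> by (auto simp: is_design_def)
  have "\<exists>i<v1. \<exists>k<d. \<xi> i k \<noteq> 0"
    using \<xi>_sum by (metis (no_types, lifting) lessThan_iff sum.neutral zero_neq_one)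
  then obtain i k where ik: "i < v1" "k < d" and "\<xi> i k \<noteq> 0" by blast
  then have "\<xi> i k > 0" using \<xi>_nonneg by (auto simp: less_le)
  then have "\<xi> i k * lam i > 0" using lam_pos ik by simp
  moreover have "\<xi> i k * lam i \<le> (\<Sum>k'<d. \<xi> i k' * lam i)"
    using ik \<xi>_nonneg lam_pos by (intro member_le_sum) (auto intro: less_imp_le)
  moreover have "(\<Sum>k'<d. \<xi> i k' * lam i) \<le> L"
    unfolding L_def using ik \<xi>_nonneg lam_pos
    by (intro member_le_sum) (auto intro!: sum_nonneg intro: less_imp_le)
  ultimately show L: "L > 0" unfolding L_def by linarith
  show w: "prob_vec v1 w"
    using \<xi>_nonneg \<xi>_sum
    by (auto simp: prob_vec_def w_def treatment_marginal_def intro!: sum_nonneg)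
  have "\<alpha> k \<ge> 0" if "k < d" for k
    unfolding \<alpha>_def weighted_covariate_marginal_def L_def[symmetric]
    using that \<xi>_nonneg lam_pos L by (intro divide_nonneg_pos sum_nonneg) (auto intro: less_imp_le)
  moreover have "(\<Sum>k<d. \<alpha> k) = 1"
    unfolding \<alpha>_def weighted_covariate_marginal_def L_def[symmetric] sum_divide_distrib[symmetric]
    using L by (simp add: L_def sum.swap[of _ "{..<d}"])
  ultimately show \<alpha>: "prob_vec d \<alpha>" by (simp add: prob_vec_def)
  show "is_design v1 d (\<lambda>i k. w i * \<alpha> k)"
    using w \<alpha> by (simp add: is_design_def prob_vec_def sum_distrib_left[symmetric]
        sum_distrib_right[symmetric])
qed

lemma product_design_not_worse:
  fixes \<xi> :: "nat \<Rightarrow> nat \<Rightarrow> real" and lam :: "nat \<Rightarrow> real" and g :: "nat \<Rightarrow> real vec"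
  assumes lam_pos: "\<forall>i<v1. lam i > 0" and g_dim: "\<forall>k<d. g k \<in> carrier_vec v2"
    and Q1: "Q1 \<in> carrier_mat v1 s1" and Q1_rank: "full_col_rank Q1"
    and K: "K \<in> carrier_mat v2 s2" and K_rank: "full_col_rank K"
    and Phi: "information_function (s1 + s2) \<Phi>" and eig: "eigenvalue_based (s1 + s2) \<Phi>"
    and feas: "feasible v1 v2 d lam g (coef_mat Q1 K v1 v2 s1 s2) \<xi>"
  defines "A \<equiv> coef_mat Q1 K v1 v2 s1 s2"
    and "\<eta> \<equiv> \<lambda>i k. treatment_marginal d \<xi> i * weighted_covariate_marginal v1 d lam \<xi> k"
  shows "feasible v1 v2 d lam g A \<eta>"
    and "\<Phi> (info_mat v1 v2 d lam g A \<xi>) \<le> \<Phi> (info_mat v1 v2 d lam g A \<eta>)"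
proof -
  have \<xi>: "is_design v1 d \<xi>" and cs: "colspace_sub A (moment_mat v1 v2 d lam g \<xi>)"
    using feas by (auto simp: feasible_def A_def)
  note marginal = marginal_product_design[OF \<xi> lam_pos, folded \<eta>_def]
  have A: "A \<in> carrier_mat (v1 + 1 + v2) (s1 + s2)" and rk: "full_col_rank A"
    unfolding A_def
    by (rule coef_mat_carrier[OF Q1 K], rule coef_mat_full_col_rank[OF Q1 K Q1_rank K_rank])
  have M\<xi>: "nnd (v1 + 1 + v2) (moment_mat v1 v2 d lam g \<xi>)"
    using \<xi> unfolding is_design_def by (blast intro: moment_mat_nnd[OF _ lam_pos])
  have M\<eta>: "nnd (v1 + 1 + v2) (moment_mat v1 v2 d lam g \<eta>)"
    using marginal(4) unfolding is_design_def by (blast intro: moment_mat_nnd[OF _ lam_pos])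
  note S = reflection_mat_carrier reflection_mat_symmetric reflection_mat_involution
  note bound = info_mat_symmetrization_bound[OF M\<xi> M\<eta> A rk cs S(1)
      product_design_symmetrization[OF g_dim Q1 K marginal(1), folded A_def \<eta>_def]]
  show "feasible v1 v2 d lam g A \<eta>"
    using bound(1) marginal(4) by (simp add: feasible_def)
  show "\<Phi> (info_mat v1 v2 d lam g A \<xi>) \<le> \<Phi> (info_mat v1 v2 d lam g A \<eta>)"
    unfolding info_mat_def
    by (rule information_function_ge_if_symmetrization_le[OF Phi eig _ _ S bound(2)])
      (use info_mat_quadratic_form(1)[OF M\<xi> A rk cs]
        info_mat_quadratic_form(1)[OF M\<eta> A rk bound(1)] in auto)
qed

theorem theorem1:
  fixes v1 v2 d s1 s2 :: nat
    and lam :: "nat \<Rightarrow> real" and g :: "nat \<Rightarrow> real vec"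
    and Q1 K :: "real mat" and \<Phi> :: "real mat \<Rightarrow> real"
  assumes lam_pos: "\<forall>i<v1. lam i > 0"
    and g_dim: "\<forall>k<d. g k \<in> carrier_vec v2"
    and Q1_dim: "Q1 \<in> carrier_mat v1 s1"
    and Q1_rank: "full_col_rank Q1"
    and Q1_contrast: "transpose_mat Q1 *\<^sub>v vec v1 (\<lambda>_. 1) = 0\<^sub>v s1"
    and Q1_nozero: "\<forall>i<v1. \<exists>j<s1. Q1 $$ (i, j) \<noteq> 0"
    and K_dim: "K \<in> carrier_mat v2 s2"
    and K_rank: "full_col_rank K"
    and Phi_info: "information_function (s1 + s2) \<Phi>"
    and Phi_eig: "eigenvalue_based (s1 + s2) \<Phi>"
    and ex_opt: "\<exists>\<xi>. phi_optimal \<Phi> v1 v2 d lam g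
                   (four_block_mat Q1 (0\<^sub>m v1 s2) (0\<^sub>m (1 + v2) s1)
                      (four_block_mat (0\<^sub>m 1 s2) (0\<^sub>m 1 0) K (0\<^sub>m v2 0))) \<xi>"
  shows "\<exists>w \<alpha>. prob_vec v1 w \<and> prob_vec d \<alpha> \<and>
           phi_optimal \<Phi> v1 v2 d lam g
             (four_block_mat Q1 (0\<^sub>m v1 s2) (0\<^sub>m (1 + v2) s1)
                (four_block_mat (0\<^sub>m 1 s2) (0\<^sub>m 1 0) K (0\<^sub>m v2 0)))
             (\<lambda>i k. w i * \<alpha> k)"
proof -
  let ?A = "coef_mat Q1 K v1 v2 s1 s2"
  obtain \<xi> where opt: "phi_optimal \<Phi> v1 v2 d lam g ?A \<xi>"
    using ex_opt by (auto simp: coef_mat_def)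
  define w where "w = treatment_marginal d \<xi>"
  define \<alpha> where "\<alpha> = weighted_covariate_marginal v1 d lam \<xi>"
  have feas: "feasible v1 v2 d lam g ?A \<xi>"
    and best: "\<And>\<zeta>. feasible v1 v2 d lam g ?A \<zeta> \<Longrightarrow>
      \<Phi> (info_mat v1 v2 d lam g ?A \<zeta>) \<le> \<Phi> (info_mat v1 v2 d lam g ?A \<xi>)"
    using opt by (auto simp: phi_optimal_def)
  note marginal = marginal_product_design[of v1 d \<xi> lam, folded w_def \<alpha>_def]
  note better = product_design_not_worse[OF lam_pos g_dim Q1_dim Q1_rank K_dim K_rank
      Phi_info Phi_eig feas, folded w_def \<alpha>_def]
  have "phi_optimal \<Phi> v1 v2 d lam g ?A (\<lambda>i k. w i * \<alpha> k)"
    unfolding phi_optimal_def using better best by fastforce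
  moreover have "prob_vec v1 w" and "prob_vec d \<alpha>"
    using marginal feas lam_pos by (auto simp: feasible_def)
  ultimately show ?thesis unfolding coef_mat_def by blast
qed

end
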